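(* Let $k$ be a positive integer. In $\mathfrak{h}^1_t[[u]]$, $$S_t\left(\frac{1}{1-z_ku}\right)=\frac{1}{1-\sum_{i=2}^\infty t^{i-2}(t-1)z_{ik}u^i}\ast S\left(\frac{1}{1-z_ku}\right).$$ In particular, for any integer $n\ge0$, $$S_t(z_k^n)=S(z_k^n)+\sum_{j=2}^n\sum_{m=1}^{\lfloor j/2\rfloor}t^{j-2m}(t-1)^m\Big(\sum_{\substack{i_1+\cdots+i_m=j\\ i_1,\ldots,i_m\ge2}}z_{i_1k}\cdots z_{i_mk}\Big)\ast S(z_k^{n-j}),$$ and if $k\ge2$, $$\zeta^t(\{k\}^n)=\zeta^\star(\{k\}^n)+\sum_{j=2}^n\sum_{m=1}^{\lfloor j/2\rfloor}t^{j-2m}(t-1)^m\Big(\sum_{\substack{i_1+\cdots+i_m=j\\ i_1,\ldots,i_m\ge2}}\zeta(i_1k,\ldots,i_mk)\Big)\zeta^\star(\{k\}^{n-j}).$$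
   Context: $t,u$ are commuting variables. $\mathfrak{h}_t=\mathbb{Q}[t]\langle x,y\rangle$ ($1$ = empty word), $\mathfrak{h}^1_t=\mathbb{Q}[t]+\mathfrak{h}_ty$, $z_k=x^{k-1}y$; for $X$ without constant term $\frac1{1-X}=\sum_{n\ge0}X^n$ with concatenation powers. For a parameter $s$, $\sigma_s$ is the algebra automorphism with $\sigma_s(x)=x,\sigma_s(y)=sx+y$ and $S_s$ is the linear map with $S_s(1)=1$, $S_s(wa)=\sigma_s(w)a$ for words $w$ and letters $a$; $S:=S_1$. The harmonic product $\ast$ on $\mathfrak{h}^1_t$ is the $\mathbb{Q}[t]$-bilinear product with $1\ast w=w\ast1=w$ and $z_kw_1\ast z_lw_2=z_k(w_1\ast z_lw_2)+z_l(z_kw_1\ast w_2)+z_{k+l}(w_1\ast w_2)$ for words $w_1,w_2\in\mathfrak{h}^1_t$, extended coefficientwise to power series in $u$. $\{k\}^n$ is $n$ repetitions of $k$; values at the empty index are $1$. For $k_1\ge2$, $\zeta(k_1,\ldots,k_n)=\sum_{m_1>\cdots>m_n>0}\prod m_j^{-k_j}$, $\zeta^\star(k_1,\ldots,k_n)=\sum_{m_1\ge\cdots\ge m_n>0}\prod m_j^{-k_j}$, $\zeta^t(k_1,\ldots,k_n)=\sum_{\mathbf p}t^{n-\mathrm{dep}(\mathbf p)}\zeta(\mathbf p)$ over sequences $\mathbf p$ obtained from $(k_1,\ldots,k_n)$ by replacing each separating comma by a comma or a plus sign ($\mathrm{dep}$ = length). *)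

theory Defs
  imports "HOL-Analysis.Analysis" "HOL-Computational_Algebra.Polynomial"
begin

datatype letter = Lx | Ly

type_synonym word = "letter list"

text \<open>An element of h_t is represented by its coefficient function
  (words to Q[t]); all elements used below are finitely supported.\<close>
type_synonym nc = "word \<Rightarrow> rat poly"

definition nc_zero :: nc where "nc_zero = (\<lambda>_. 0)"
definition nc_add :: "nc \<Rightarrow> nc \<Rightarrow> nc" where "nc_add f g = (\<lambda>w. f w + g w)"
definition nc_smult :: "rat poly \<Rightarrow> nc \<Rightarrow> nc" where "nc_smult c f = (\<lambda>w. c * f w)"

definition wd :: "word \<Rightarrow> nc" where "wd u = (\<lambda>v. if v = u then 1 else 0)"

definition cat :: "nc \<Rightarrow> nc \<Rightarrow> nc" where
  "cat f g = (\<lambda>w. \<Sum>i\<le>length w. f (take i w) * g (drop i w))"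

definition supp :: "nc \<Rightarrow> word set" where "supp f = {w. f w \<noteq> 0}"

definition lin :: "(word \<Rightarrow> nc) \<Rightarrow> nc \<Rightarrow> nc" where
  "lin B f = (\<lambda>v. \<Sum>w\<in>supp f. f w * B w v)"

definition tvar :: "rat poly" where "tvar = [:0, 1:]"

fun sigma_letter :: "rat poly \<Rightarrow> letter \<Rightarrow> nc" where
  "sigma_letter s Lx = wd [Lx]"
| "sigma_letter s Ly = nc_add (nc_smult s (wd [Lx])) (wd [Ly])"

fun sigma_word :: "rat poly \<Rightarrow> word \<Rightarrow> nc" where
  "sigma_word s [] = wd []"
| "sigma_word s (a # w) = cat (sigma_letter s a) (sigma_word s w)"

definition sigma :: "rat poly \<Rightarrow> nc \<Rightarrow> nc" where "sigma s = lin (sigma_word s)"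

definition S_word :: "rat poly \<Rightarrow> word \<Rightarrow> nc" where
  "S_word s w = (if w = [] then wd [] else cat (sigma_word s (butlast w)) (wd [last w]))"

definition S_map :: "rat poly \<Rightarrow> nc \<Rightarrow> nc" where "S_map s = lin (S_word s)"

definition z :: "nat \<Rightarrow> word" where "z k = replicate (k - 1) Lx @ [Ly]"

definition zw :: "nat \<Rightarrow> nc" where "zw k = wd (z k)"

definition zs :: "nat list \<Rightarrow> word" where "zs ks = concat (map z ks)"

text \<open>decomposition of a word of h^1 into its z-indices\<close>
fun idx_aux :: "nat \<Rightarrow> word \<Rightarrow> nat list" where
  "idx_aux c [] = []"
| "idx_aux c (Lx # w) = idx_aux (Suc c) w"
| "idx_aux c (Ly # w) = Suc c # idx_aux 0 w"

definition idx :: "word \<Rightarrow> nat list" where "idx w = idx_aux 0 w"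

fun harm_idx :: "nat list \<Rightarrow> nat list \<Rightarrow> nc" where
  "harm_idx [] l = wd (zs l)"
| "harm_idx k [] = wd (zs k)"
| "harm_idx (a # k) (b # l) =
     nc_add (nc_add (cat (zw a) (harm_idx k (b # l))) (cat (zw b) (harm_idx (a # k) l)))
            (cat (zw (a + b)) (harm_idx k l))"

definition hprod :: "nc \<Rightarrow> nc \<Rightarrow> nc" where
  "hprod f g = (\<lambda>x. \<Sum>v\<in>supp f. \<Sum>w\<in>supp g. f v * g w * harm_idx (idx v) (idx w) x)"

type_synonym ser = "nat \<Rightarrow> nc"  \<comment> \<open>n-th coefficient = coefficient of u^n\<close>

definition ser_one :: ser where "ser_one = (\<lambda>n. if n = 0 then wd [] else nc_zero)"

definition ser_cat :: "ser \<Rightarrow> ser \<Rightarrow> ser" where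
  "ser_cat A B = (\<lambda>n w. \<Sum>i\<le>n. cat (A i) (B (n - i)) w)"

fun ser_pow :: "ser \<Rightarrow> nat \<Rightarrow> ser" where
  "ser_pow A 0 = ser_one"
| "ser_pow A (Suc m) = ser_cat A (ser_pow A m)"

text \<open>1/(1-X) = sum of concatenation powers X^m, for X without constant term
  (X^m only contributes to u^n for m \<le> n)\<close>
definition geom :: "ser \<Rightarrow> ser" where
  "geom A = (\<lambda>n w. \<Sum>m\<le>n. ser_pow A m n w)"

definition ser_harm :: "ser \<Rightarrow> ser \<Rightarrow> ser" where
  "ser_harm A B = (\<lambda>n w. \<Sum>i\<le>n. hprod (A i) (B (n - i)) w)"

definition ser_S :: "rat poly \<Rightarrow> ser \<Rightarrow> ser" where
  "ser_S s A = (\<lambda>n. S_map s (A n))"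

definition zu :: "nat \<Rightarrow> ser" where "zu k = (\<lambda>n. if n = 1 then zw k else nc_zero)"

definition Xser :: "nat \<Rightarrow> ser" where
  "Xser k = (\<lambda>i. if 2 \<le> i then nc_smult (tvar ^ (i - 2) * (tvar - 1)) (zw (i * k)) else nc_zero)"

definition comps :: "nat \<Rightarrow> nat \<Rightarrow> nat list set" where
  "comps m j = {is. length is = m \<and> sum_list is = j \<and> (\<forall>i\<in>set is. 2 \<le> i)}"

definition mzv :: "nat list \<Rightarrow> real" where
  "mzv ks = infsum (\<lambda>ms. \<Prod>j<length ks. 1 / real (ms ! j) ^ (ks ! j))
     {ms. length ms = length ks \<and> sorted_wrt (>) ms \<and> (\<forall>m\<in>set ms. 0 < m)}"

definition mzv_star :: "nat list \<Rightarrow> real" where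
  "mzv_star ks = infsum (\<lambda>ms. \<Prod>j<length ks. 1 / real (ms ! j) ^ (ks ! j))
     {ms. length ms = length ks \<and> sorted_wrt (\<ge>) ms \<and> (\<forall>m\<in>set ms. 0 < m)}"

text \<open>all sequences obtained by replacing each comma by a comma or a plus sign\<close>
fun coarsen :: "nat list \<Rightarrow> nat list list" where
  "coarsen [] = [[]]"
| "coarsen [k] = [[k]]"
| "coarsen (k # l # ks) =
     map (\<lambda>p. k # p) (coarsen (l # ks)) @ map (\<lambda>p. (k + hd p) # tl p) (coarsen (l # ks))"

definition mzv_t :: "nat list \<Rightarrow> real poly" where
  "mzv_t ks = (\<Sum>p\<leftarrow>coarsen ks. monom (mzv p) (length ks - length p))"

end

theory Submission
  imports Defs "HOL-Library.Function_Algebras"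
begin

text \<open>
  The series \<open>1/(1 - z\<^sub>k u)\<close> and its images under \<open>S\<^sub>s\<close> are geometric series
  \<open>1/(1 - X)\<close> of letter series \<open>X = \<Sum>\<^sub>i c\<^sub>i z\<^sub>i\<^sub>k u\<^sup>i\<close> (\<open>zk_series k c\<close>) with \<open>c\<^sub>0 = 0\<close>:
  since \<open>\<sigma>\<^sub>s(z\<^sub>k) = z\<^sub>k + s x\<^sup>k\<close>, \<open>S\<^sub>s(1/(1 - z\<^sub>k u)) = 1/(1 - \<Sum>\<^sub>r\<^sub>\<ge>\<^sub>1 s\<^sup>r\<^sup>-\<^sup>1 z\<^sub>r\<^sub>k u\<^sup>r)\<close>.
  For letter series \<open>X, Y\<close> with coefficients \<open>c, d\<close>, the recursions \<open>G = 1 + X G\<close>,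
  \<open>B = 1 + Y B\<close> for \<open>G = 1/(1 - X)\<close>, \<open>B = 1/(1 - Y)\<close> and the recursive definition of the
  harmonic product give \<open>G * B = 1 + (X + Y + X \<diamond> Y)(G * B)\<close>, where \<open>X \<diamond> Y\<close> is the letter
  series of the Cauchy product \<open>coeff_conv c d\<close>; so \<open>G * B\<close> is again geometric, with
  coefficients given by \<open>(1 + c)(1 + d) - 1\<close>. The first identity then reduces to
  \<open>(1 + \<Sum>\<^sub>i\<^sub>\<ge>\<^sub>2 t\<^sup>i\<^sup>-\<^sup>2(t - 1) u\<^sup>i) / (1 - u) = 1 + u / (1 - t u)\<close>, and expanding
  \<open>1/(1 - \<Sum>\<^sub>i\<^sub>\<ge>\<^sub>2 t\<^sup>i\<^sup>-\<^sup>2(t - 1) z\<^sub>i\<^sub>k u\<^sup>i)\<close> by compositions gives the second.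

  For the third, a word \<open>z\<^sub>k\<^sub>1\<cdots>z\<^sub>k\<^sub>n\<close> is sent to the truncated sum over
  \<open>N > m\<^sub>1 > \<cdots> > m\<^sub>n > 0\<close>. The truncated sums obey the recursion of the harmonic product,
  so this map is multiplicative; it sends \<open>S\<^sub>t(z\<^sub>k\<^sup>n)\<close>, written as a sum over coarsenings
  of \<open>(k, \<dots>, k)\<close>, to the truncated \<open>\<zeta>\<^sup>t({k}\<^sup>n)\<close> and \<open>S(z\<^sub>k\<^sup>n)\<close> to the truncated
  \<open>\<zeta>\<^sup>\<star>({k}\<^sup>n)\<close>. As \<open>N \<rightarrow> \<infinity>\<close> the truncated sums increase to the infinite sums
  (nonnegative terms), and the identity passes to the limit coefficientwise.
\<close>

section \<open>Finitely supported elements of h_t\<close>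

lemma sum_fun_apply: "sum f A x = (\<Sum>a\<in>A. f a x)"
  by (induction A rule: infinite_finite_induct) auto

lemma nc_add_eq_plus: "nc_add f g = f + g"
  by (simp add: nc_add_def fun_eq_iff)

lemma nc_zero_eq_zero: "nc_zero = 0"
  by (simp add: nc_zero_def fun_eq_iff)

lemma nc_smult_apply [simp]: "nc_smult c f w = c * f w"
  by (simp add: nc_smult_def)

lemma nc_smult_add_right: "nc_smult c (f + g) = nc_smult c f + nc_smult c g"
  by (simp add: fun_eq_iff algebra_simps)

lemma nc_smult_add_left: "nc_smult (c + d) f = nc_smult c f + nc_smult d f"
  by (simp add: fun_eq_iff algebra_simps)

lemma nc_smult_zero_right [simp]: "nc_smult c 0 = 0"
  by (simp add: fun_eq_iff)

lemma nc_smult_zero_left [simp]: "nc_smult 0 f = 0"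
  by (simp add: fun_eq_iff)

lemma nc_smult_one [simp]: "nc_smult 1 f = f"
  by (simp add: fun_eq_iff)

lemma nc_smult_nc_smult [simp]: "nc_smult c (nc_smult d f) = nc_smult (c * d) f"
  by (simp add: fun_eq_iff)

lemma nc_smult_sum_right: "nc_smult c (\<Sum>i\<in>I. f i) = (\<Sum>i\<in>I. nc_smult c (f i))"
  by (simp add: fun_eq_iff sum_fun_apply sum_distrib_left)

lemma nc_smult_sum_left: "nc_smult (\<Sum>i\<in>I. c i) f = (\<Sum>i\<in>I. nc_smult (c i) f)"
  by (simp add: fun_eq_iff sum_fun_apply sum_distrib_right)

lemma nc_smult_sum_list_right:
  "nc_smult c (sum_list (map f L)) = sum_list (map (\<lambda>x. nc_smult c (f x)) L)"
  by (induction L) (simp_all only: list.map sum_list.Cons sum_list.Nil nc_smult_add_right nc_smult_zero_right)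

lemma cat_Nil: "cat f g [] = f [] * g []"
  by (simp add: cat_def)

lemma cat_Cons: "cat f g (a # w) = f [] * g (a # w) + cat (\<lambda>v. f (a # v)) g w"
  unfolding cat_def length_Cons sum.atMost_Suc_shift by simp

lemma cat_add_left: "cat (f + g) h = cat f h + cat g h"
  by (simp add: cat_def fun_eq_iff algebra_simps sum.distrib)

lemma cat_add_right: "cat h (f + g) = cat h f + cat h g"
  by (simp add: cat_def fun_eq_iff algebra_simps sum.distrib)

lemma cat_zero_left [simp]: "cat 0 h = 0"
  by (simp add: cat_def fun_eq_iff)

lemma cat_zero_right [simp]: "cat h 0 = 0"
  by (simp add: cat_def fun_eq_iff)

lemma cat_lambda_zero_left [simp]: "cat (\<lambda>_. 0) h = 0"
  by (simp add: cat_def fun_eq_iff)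

lemma cat_lambda_zero_right [simp]: "cat h (\<lambda>_. 0) = 0"
  by (simp add: cat_def fun_eq_iff)

lemma cat_smult_left: "cat (nc_smult c f) h = nc_smult c (cat f h)"
  by (simp add: cat_def fun_eq_iff algebra_simps sum_distrib_left)

lemma cat_smult_right: "cat h (nc_smult c f) = nc_smult c (cat h f)"
  by (simp add: cat_def fun_eq_iff algebra_simps sum_distrib_left)

lemma cat_sum_left: "cat (\<Sum>i\<in>I. f i) h = (\<Sum>i\<in>I. cat (f i) h)"
proof (induction I rule: infinite_finite_induct)
  case (insert x F)
  then show ?case by (metis sum.insert cat_add_left)
qed simp_all

lemma cat_sum_right: "cat h (\<Sum>i\<in>I. f i) = (\<Sum>i\<in>I. cat h (f i))"
proof (induction I rule: infinite_finite_induct)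
  case (insert x F)
  then show ?case by (metis sum.insert cat_add_right)
qed simp_all

lemma cat_sum_list_right: "cat h (sum_list (map f L)) = sum_list (map (\<lambda>x. cat h (f x)) L)"
  by (induction L) (simp_all only: list.map sum_list.Cons sum_list.Nil cat_add_right cat_zero_right)

lemma cat_assoc: "cat f (cat g h) = cat (cat f g) h"
proof
  fix w show "cat f (cat g h) w = cat (cat f g) h w"
  proof (induction w arbitrary: f)
    case Nil
    then show ?case by (simp add: cat_Nil)
  next
    case (Cons a w)
    have e: "(\<lambda>v. cat f g (a # v)) = nc_smult (f []) (\<lambda>v. g (a # v)) + cat (\<lambda>v. f (a # v)) g"
      by (simp add: fun_eq_iff cat_Cons)
    have "cat (cat f g) h (a#w) = cat f g [] * h (a#w) + cat (\<lambda>v. cat f g (a#v)) h w"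
      by (rule cat_Cons)
    also have "\<dots> = f [] * g [] * h (a#w) + cat (nc_smult (f []) (\<lambda>v. g (a # v)) + cat (\<lambda>v. f (a # v)) g) h w"
      by (simp only: e cat_Nil)
    also have "\<dots> = f [] * g [] * h (a#w) + f [] * cat (\<lambda>v. g (a # v)) h w + cat (cat (\<lambda>v. f (a # v)) g) h w"
      by (simp add: cat_add_left cat_smult_left)
    finally show ?case
      by (simp add: cat_Cons Cons cat_Nil algebra_simps)
  qed
qed

lemma wd_Cons_shift: "(\<lambda>v. wd (b # u) (a # v)) = (if a = b then wd u else 0)"
  by (auto simp: wd_def fun_eq_iff)

lemma cat_wd_Nil_left [simp]: "cat (wd []) g = g"
proof
  fix w show "cat (wd []) g w = g w"
    by (cases w) (auto simp: cat_Nil cat_Cons wd_def fun_eq_iff cong: if_cong)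
qed

lemma cat_wd_Nil_right [simp]: "cat f (wd []) = f"
proof
  fix w show "cat f (wd []) w = f w"
  proof (induction w arbitrary: f)
    case Nil
    then show ?case by (simp add: cat_Nil wd_def)
  next
    case (Cons a w)
    then show ?case by (simp add: cat_Cons wd_def)
  qed
qed

lemma cat_wd_apply: "cat (wd u) g w = (if take (length u) w = u then g (drop (length u) w) else 0)"
proof (induction u arbitrary: w)
  case Nil
  then show ?case by simp
next
  case (Cons b u)
  show ?case
  proof (cases w)
    case Nil then show ?thesis by (simp add: cat_Nil wd_def)
  next
    case (Cons a w')
    show ?thesis using Cons.IH
      by (simp add: \<open>w = a # w'\<close> cat_Cons wd_Cons_shift) (simp add: wd_def)
  qed
qed

lemma cat_wd_wd [simp]: "cat (wd u) (wd v) = wd (u @ v)"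
proof
  fix w
  show "cat (wd u) (wd v) w = wd (u @ v) w"
  proof (cases "w = u @ v")
    case True then show ?thesis by (simp only: cat_wd_apply) (simp add: wd_def)
  next
    case False
    have "\<not> (take (length u) w = u \<and> drop (length u) w = v)"
      using False append_take_drop_id[of "length u" w] by metis
    then show ?thesis using False by (simp only: cat_wd_apply) (auto simp add: wd_def)
  qed
qed

definition finsupp :: "nc \<Rightarrow> bool" where
  "finsupp f \<longleftrightarrow> finite (supp f)"

lemma supp_wd [simp]: "supp (wd u) = {u}"
  by (auto simp: supp_def wd_def)

lemma finsupp_wd [simp]: "finsupp (wd u)"
  by (simp add: finsupp_def)

lemma finsupp_zero [simp]: "finsupp 0"
  by (simp add: finsupp_def supp_def)

lemma finsupp_add [simp]: "finsupp f \<Longrightarrow> finsupp g \<Longrightarrow> finsupp (f + g)"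
  unfolding finsupp_def by (rule finite_subset[of _ "supp f \<union> supp g"]) (auto simp: supp_def)

lemma finsupp_nc_smult [simp]: "finsupp f \<Longrightarrow> finsupp (nc_smult c f)"
  unfolding finsupp_def by (rule finite_subset[of _ "supp f"]) (auto simp: supp_def)

lemma finsupp_sum [simp]: "(\<And>i. i \<in> I \<Longrightarrow> finsupp (f i)) \<Longrightarrow> finsupp (\<Sum>i\<in>I. f i)"
  by (induction I rule: infinite_finite_induct) auto

lemma supp_cat_wd: "supp (cat (wd u) g) \<subseteq> (\<lambda>v. u @ v) ` supp g"
proof
  fix x assume "x \<in> supp (cat (wd u) g)"
  then have a: "take (length u) x = u" and b: "g (drop (length u) x) \<noteq> 0"
    by (auto simp: supp_def cat_wd_apply split: if_splits)
  have "x = u @ drop (length u) x" using a append_take_drop_id[of "length u" x] by simp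
  then show "x \<in> (\<lambda>v. u @ v) ` supp g" using b by (auto simp: supp_def)
qed

lemma finsupp_cat_wd [simp]: "finsupp g \<Longrightarrow> finsupp (cat (wd u) g)"
  unfolding finsupp_def using supp_cat_wd finite_subset by blast

lemma finsupp_cat_zw [simp]: "finsupp g \<Longrightarrow> finsupp (cat (zw a) g)"
  by (simp add: zw_def)

lemma finsupp_sum_list: "(\<And>x. x \<in> set L \<Longrightarrow> finsupp (f x)) \<Longrightarrow> finsupp (sum_list (map f L))"
  by (induction L) auto

lemma nc_expansion_superset: "finite F \<Longrightarrow> supp f \<subseteq> F \<Longrightarrow> f = (\<Sum>v\<in>F. nc_smult (f v) (wd v))"
proof
  fix x assume F: "finite F" "supp f \<subseteq> F"
  show "f x = (\<Sum>v\<in>F. nc_smult (f v) (wd v)) x"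
  proof (cases "x \<in> F")
    case True
    have "(\<Sum>v\<in>F. nc_smult (f v) (wd v)) x = (\<Sum>v\<in>F. if v = x then f v else 0)"
      by (simp add: sum_fun_apply wd_def) (rule sum.cong, auto)
    then show ?thesis using F True by simp
  next
    case False
    then have "f x = 0" using F by (auto simp: supp_def)
    have "(\<Sum>v\<in>F. nc_smult (f v) (wd v)) x = (\<Sum>v\<in>F. if v = x then f v else 0)"
      by (simp add: sum_fun_apply wd_def) (rule sum.cong, auto)
    then show ?thesis using F False \<open>f x = 0\<close> by simp
  qed
qed

lemma nc_expansion: "finsupp f \<Longrightarrow> f = (\<Sum>v\<in>supp f. nc_smult (f v) (wd v))"
  using nc_expansion_superset finsupp_def by blast

section \<open>Words of h^1 as index lists\<close>

lemma replicate_Lx_append_z: "1 \<le> j \<Longrightarrow> replicate i Lx @ z j = z (i + j)"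
  by (simp add: z_def replicate_add[symmetric])

lemma idx_aux_replicate_Lx: "idx_aux c (replicate n Lx @ w) = idx_aux (c + n) w"
  by (induction n arbitrary: c) auto

lemma idx_z_append: "1 \<le> a \<Longrightarrow> idx (z a @ v) = a # idx v"
  by (simp add: idx_def z_def idx_aux_replicate_Lx)

lemma zs_Cons: "zs (a # ks) = z a @ zs ks"
  by (simp add: zs_def)

lemma idx_zs: "\<forall>x\<in>set ks. 1 \<le> x \<Longrightarrow> idx (zs ks) = ks"
proof (induction ks)
  case Nil
  then show ?case by (simp add: zs_def idx_def)
next
  case (Cons a ks)
  then show ?case by (simp add: zs_Cons idx_z_append)
qed

lemma zs_idx_aux: "w \<noteq> [] \<Longrightarrow> last w = Ly \<Longrightarrow> zs (idx_aux c w) = replicate c Lx @ w"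
proof (induction w arbitrary: c)
  case Nil
  then show ?case by simp
next
  case (Cons a w)
  show ?case
  proof (cases a)
    case Lx
    then have "w \<noteq> []" using Cons.prems by auto
    then have "last w = Ly" using Cons.prems by auto
    then show ?thesis
      using Cons.IH[of "Suc c"] \<open>w \<noteq> []\<close> Lx by (simp add: replicate_app_Cons_same)
  next
    case Ly
    show ?thesis
    proof (cases "w = []")
      case True then show ?thesis using Ly by (simp add: zs_def z_def)
    next
      case False
      then have "last w = Ly" using Cons.prems by auto
      then show ?thesis using Cons.IH[of 0] False Ly by (simp add: zs_def z_def)
    qed
  qed
qed

lemma idx_Nil [simp]: "idx [] = []"
  by (simp add: idx_def)

lemma zs_Nil [simp]: "zs [] = []"
  by (simp add: zs_def)

lemma zs_idx: "w = [] \<or> last w = Ly \<Longrightarrow> zs (idx w) = w"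
proof (cases "w = []")
  case False
  assume "w = [] \<or> last w = Ly"
  then show ?thesis using zs_idx_aux[of w 0] False by (simp add: idx_def)
qed simp

lemma idx_aux_ge1: "x \<in> set (idx_aux c w) \<Longrightarrow> 1 \<le> x"
  by (induction c w rule: idx_aux.induct) auto

lemma idx_ge1: "\<forall>x\<in>set (idx w). 1 \<le> x"
  using idx_aux_ge1 by (auto simp: idx_def)

lemma z_ne_last: "z a \<noteq> [] \<and> last (z a) = Ly"
  by (simp add: z_def)

section \<open>The harmonic product on finitely supported elements\<close>

abbreviation harm_words :: "word \<Rightarrow> word \<Rightarrow> nc" where "harm_words v w \<equiv> harm_idx (idx v) (idx w)"

lemma hprod_eq_sum: "hprod f g = (\<Sum>v\<in>supp f. \<Sum>w\<in>supp g. nc_smult (f v * g w) (harm_words v w))"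
  by (simp add: hprod_def fun_eq_iff sum_fun_apply)

lemma hprod_superset:
  assumes "finite F" "supp f \<subseteq> F" "finite G" "supp g \<subseteq> G"
  shows "hprod f g = (\<Sum>v\<in>F. \<Sum>w\<in>G. nc_smult (f v * g w) (harm_words v w))"
proof -
  have "hprod f g = (\<Sum>v\<in>supp f. \<Sum>w\<in>G. nc_smult (f v * g w) (harm_words v w))"
    unfolding hprod_eq_sum
    by (rule sum.cong[OF refl], rule sum.mono_neutral_left) (use assms in \<open>auto simp: supp_def\<close>)
  also have "\<dots> = (\<Sum>v\<in>F. \<Sum>w\<in>G. nc_smult (f v * g w) (harm_words v w))"
    by (rule sum.mono_neutral_left) (use assms in \<open>auto simp: supp_def\<close>)
  finally show ?thesis .
qed

lemma supp_add: "supp (f + g) \<subseteq> supp f \<union> supp g"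
  by (auto simp: supp_def)

lemma hprod_add_left:
  assumes "finsupp f" "finsupp f'" "finsupp g"
  shows "hprod (f + f') g = hprod f g + hprod f' g"
proof -
  let ?F = "supp f \<union> supp f'"
  have fF: "finite ?F" using assms by (simp add: finsupp_def)
  have g: "finite (supp g)" using assms by (simp add: finsupp_def)
  have "hprod (f + f') g = (\<Sum>v\<in>?F. \<Sum>w\<in>supp g. nc_smult ((f + f') v * g w) (harm_words v w))"
    by (rule hprod_superset[OF fF _ g]) (use supp_add in auto)
  also have "\<dots> = (\<Sum>v\<in>?F. \<Sum>w\<in>supp g. nc_smult (f v * g w) (harm_words v w))
     + (\<Sum>v\<in>?F. \<Sum>w\<in>supp g. nc_smult (f' v * g w) (harm_words v w))"
    by (simp add: algebra_simps nc_smult_add_left sum.distrib)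
  also have "\<dots> = hprod f g + hprod f' g"
    by (subst (1 2) hprod_superset[OF fF _ g]) auto
  finally show ?thesis .
qed

lemma hprod_add_right:
  assumes "finsupp f" "finsupp g" "finsupp g'"
  shows "hprod f (g + g') = hprod f g + hprod f g'"
proof -
  let ?G = "supp g \<union> supp g'"
  have gG: "finite ?G" using assms by (simp add: finsupp_def)
  have f: "finite (supp f)" using assms by (simp add: finsupp_def)
  have "hprod f (g + g') = (\<Sum>v\<in>supp f. \<Sum>w\<in>?G. nc_smult (f v * (g + g') w) (harm_words v w))"
    by (rule hprod_superset[OF f _ gG]) (use supp_add in auto)
  also have "\<dots> = (\<Sum>v\<in>supp f. \<Sum>w\<in>?G. nc_smult (f v * g w) (harm_words v w))
     + (\<Sum>v\<in>supp f. \<Sum>w\<in>?G. nc_smult (f v * g' w) (harm_words v w))"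
    by (simp add: algebra_simps nc_smult_add_left sum.distrib)
  also have "\<dots> = hprod f g + hprod f g'"
    by (subst (1 2) hprod_superset[OF f _ gG]) auto
  finally show ?thesis .
qed

lemma supp_nc_smult: "supp (nc_smult c f) \<subseteq> supp f"
  by (auto simp: supp_def)

lemma hprod_smult_left:
  assumes "finsupp f" "finsupp g"
  shows "hprod (nc_smult c f) g = nc_smult c (hprod f g)"
proof -
  have f: "finite (supp f)" "finite (supp g)" using assms by (auto simp: finsupp_def)
  have "hprod (nc_smult c f) g = (\<Sum>v\<in>supp f. \<Sum>w\<in>supp g. nc_smult (c * f v * g w) (harm_words v w))"
    by (subst hprod_superset[OF f(1) supp_nc_smult f(2) order_refl]) (simp add: mult.assoc)
  also have "\<dots> = nc_smult c (hprod f g)"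
    by (simp add: hprod_eq_sum nc_smult_sum_right mult.assoc)
  finally show ?thesis .
qed

lemma hprod_smult_right:
  assumes "finsupp f" "finsupp g"
  shows "hprod f (nc_smult c g) = nc_smult c (hprod f g)"
proof -
  have f: "finite (supp f)" "finite (supp g)" using assms by (auto simp: finsupp_def)
  have "hprod f (nc_smult c g) = (\<Sum>v\<in>supp f. \<Sum>w\<in>supp g. nc_smult (c * (f v * g w)) (harm_words v w))"
    by (subst hprod_superset[OF f(1) order_refl f(2) supp_nc_smult]) (simp add: algebra_simps)
  also have "\<dots> = nc_smult c (hprod f g)"
    by (simp add: hprod_eq_sum nc_smult_sum_right)
  finally show ?thesis .
qed

lemma hprod_zero_left [simp]: "hprod 0 g = 0"
  by (simp add: hprod_def supp_def fun_eq_iff)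

lemma hprod_zero_right [simp]: "hprod f 0 = 0"
  by (simp add: hprod_def supp_def fun_eq_iff)

lemma hprod_sum_left: "finite I \<Longrightarrow> (\<And>i. i \<in> I \<Longrightarrow> finsupp (f i)) \<Longrightarrow> finsupp g \<Longrightarrow>
   hprod (\<Sum>i\<in>I. f i) g = (\<Sum>i\<in>I. hprod (f i) g)"
proof (induction I rule: finite_induct)
  case (insert x F)
  have "hprod (sum f (insert x F)) g = hprod (f x + sum f F) g"
    by (simp only: sum.insert[OF insert.hyps])
  also have "\<dots> = hprod (f x) g + hprod (sum f F) g"
    by (rule hprod_add_left) (use insert in auto)
  also have "\<dots> = (\<Sum>i\<in>insert x F. hprod (f i) g)"
    using insert by (simp only: sum.insert[OF insert.hyps]) simp
  finally show ?case .
qed simp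

lemma hprod_sum_right: "finite I \<Longrightarrow> (\<And>i. i \<in> I \<Longrightarrow> finsupp (g i)) \<Longrightarrow> finsupp f \<Longrightarrow>
   hprod f (\<Sum>i\<in>I. g i) = (\<Sum>i\<in>I. hprod f (g i))"
proof (induction I rule: finite_induct)
  case (insert x F)
  have "hprod f (sum g (insert x F)) = hprod f (g x + sum g F)"
    by (simp only: sum.insert[OF insert.hyps])
  also have "\<dots> = hprod f (g x) + hprod f (sum g F)"
    by (rule hprod_add_right) (use insert in auto)
  also have "\<dots> = (\<Sum>i\<in>insert x F. hprod f (g i))"
    using insert by (simp only: sum.insert[OF insert.hyps]) simp
  finally show ?case .
qed simp

lemma hprod_sum_sum:
  assumes "finite I" "finite J" "\<And>i. i \<in> I \<Longrightarrow> finsupp (f i)" "\<And>j. j \<in> J \<Longrightarrow> finsupp (g j)"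
  shows "hprod (\<Sum>i\<in>I. f i) (\<Sum>j\<in>J. g j) = (\<Sum>i\<in>I. \<Sum>j\<in>J. hprod (f i) (g j))"
proof -
  have "hprod (\<Sum>i\<in>I. f i) (\<Sum>j\<in>J. g j) = (\<Sum>i\<in>I. hprod (f i) (\<Sum>j\<in>J. g j))"
    by (rule hprod_sum_left) (use assms in auto)
  also have "\<dots> = (\<Sum>i\<in>I. \<Sum>j\<in>J. hprod (f i) (g j))"
    by (rule sum.cong[OF refl], rule hprod_sum_right) (use assms in auto)
  finally show ?thesis .
qed

lemma wd_self [simp]: "wd u u = 1"
  by (simp add: wd_def)

lemma hprod_wd_wd: "hprod (wd u) (wd v) = harm_words u v"
  unfolding hprod_eq_sum supp_wd by simp

definition in_h1 :: "nc \<Rightarrow> bool" where "in_h1 f = (\<forall>w\<in>supp f. w = [] \<or> last w = Ly)"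

lemma harm_idx_Nil_right: "harm_idx k [] = wd (zs k)"
  by (cases k) auto

lemma hprod_wd_Nil_left:
  assumes "finsupp g" "in_h1 g"
  shows "hprod (wd []) g = g"
proof -
  have "hprod (wd []) g = (\<Sum>w\<in>supp g. nc_smult (g w) (wd w))"
    using assms unfolding hprod_eq_sum supp_wd by (auto simp: in_h1_def zs_idx intro!: sum.cong)
  then show ?thesis using nc_expansion[OF assms(1)] by simp
qed

lemma hprod_wd_Nil_right:
  assumes "finsupp f" "in_h1 f"
  shows "hprod f (wd []) = f"
proof -
  have "hprod f (wd []) = (\<Sum>w\<in>supp f. nc_smult (f w) (wd w))"
    using assms unfolding hprod_eq_sum supp_wd by (auto simp: in_h1_def zs_idx harm_idx_Nil_right intro!: sum.cong)
  then show ?thesis using nc_expansion[OF assms(1)] by simp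
qed

lemma finsupp_harm_idx: "finsupp (harm_idx k l)"
proof (induction k l rule: harm_idx.induct)
  case (3 a k b l)
  then show ?case unfolding harm_idx.simps nc_add_eq_plus zw_def
    by (intro finsupp_add finsupp_cat_wd)
qed simp_all

lemma finsupp_hprod [simp]: "finsupp (hprod f g)"
  by (simp add: hprod_eq_sum finsupp_harm_idx)

lemma in_h1_wd: "w = [] \<or> last w = Ly \<Longrightarrow> in_h1 (wd w)"
  by (simp add: in_h1_def)

lemma in_h1_zero [simp]: "in_h1 0"
  by (simp add: in_h1_def supp_def)

lemma in_h1_add [simp]: "in_h1 f \<Longrightarrow> in_h1 g \<Longrightarrow> in_h1 (f + g)" unfolding in_h1_def using supp_add[of f g]
  by blast

lemma in_h1_nc_smult [simp]: "in_h1 f \<Longrightarrow> in_h1 (nc_smult c f)" using supp_nc_smult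
  by (auto simp: in_h1_def)

lemma in_h1_sum [simp]: "(\<And>i. i \<in> I \<Longrightarrow> in_h1 (f i)) \<Longrightarrow> in_h1 (\<Sum>i\<in>I. f i)"
  by (induction I rule: infinite_finite_induct) auto

lemma in_h1_cat_wd:
  assumes "u \<noteq> []" "last u = Ly" "in_h1 g"
  shows "in_h1 (cat (wd u) g)"
  unfolding in_h1_def
proof
  fix w assume "w \<in> supp (cat (wd u) g)"
  then obtain v where v: "v \<in> supp g" "w = u @ v" using supp_cat_wd[of u g] by blast
  then show "w = [] \<or> last w = Ly" using assms unfolding in_h1_def by (cases "v = []") auto
qed

lemma in_h1_cat_zw [simp]: "in_h1 g \<Longrightarrow> in_h1 (cat (zw a) g)"
  by (simp add: zw_def in_h1_cat_wd z_ne_last)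

lemma cat_wd_expansion: "finsupp f \<Longrightarrow> cat (wd u) f = (\<Sum>v\<in>supp f. nc_smult (f v) (wd (u @ v)))"
  by (subst nc_expansion, assumption) (simp add: cat_sum_right cat_smult_right)

lemma hprod_expansions:
  assumes "finite V" "finite W"
  shows "hprod (\<Sum>v\<in>V. nc_smult (f v) (wd (\<alpha> v))) (\<Sum>w\<in>W. nc_smult (g w) (wd (\<beta> w)))
     = (\<Sum>v\<in>V. \<Sum>w\<in>W. nc_smult (f v * g w) (hprod (wd (\<alpha> v)) (wd (\<beta> w))))"
  using assms
  by (simp add: hprod_sum_left hprod_sum_right hprod_smult_left hprod_smult_right nc_smult_sum_right mult.commute)
    (rule sum.swap)

lemma hprod_cat_zw:
  assumes a: "1 \<le> a" and b: "1 \<le> b" and f: "finsupp f" and g: "finsupp g"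
  shows "hprod (cat (zw a) f) (cat (zw b) g) =
    cat (zw a) (hprod f (cat (zw b) g)) + cat (zw b) (hprod (cat (zw a) f) g)
    + cat (zw (a + b)) (hprod f g)"
proof -
  have fs: "finite (supp f)" "finite (supp g)" using f g by (auto simp: finsupp_def)
  note ef = nc_expansion[OF f] and eg = nc_expansion[OF g]
  note cf = cat_wd_expansion[OF f, of "z a"] and cg = cat_wd_expansion[OF g, of "z b"]
  have L: "hprod (cat (zw a) f) (cat (zw b) g) = (\<Sum>v\<in>supp f. \<Sum>w\<in>supp g.
      nc_smult (f v * g w) (hprod (wd (z a @ v)) (wd (z b @ w))))"
    unfolding zw_def cf cg by (rule hprod_expansions[OF fs])
  have R1: "hprod f (cat (zw b) g) = (\<Sum>v\<in>supp f. \<Sum>w\<in>supp g.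
      nc_smult (f v * g w) (hprod (wd v) (wd (z b @ w))))"
    unfolding zw_def cg by (subst ef, rule hprod_expansions[OF fs])
  have R2: "hprod (cat (zw a) f) g = (\<Sum>v\<in>supp f. \<Sum>w\<in>supp g.
      nc_smult (f v * g w) (hprod (wd (z a @ v)) (wd w)))"
    unfolding zw_def cf by (subst (1) eg, rule hprod_expansions[OF fs])
  have R3: "hprod f g = (\<Sum>v\<in>supp f. \<Sum>w\<in>supp g.
      nc_smult (f v * g w) (hprod (wd v) (wd w)))"
    by (subst (1) ef, subst (1) eg, rule hprod_expansions[OF fs])
  have key: "hprod (wd (z a @ v)) (wd (z b @ w)) =
     cat (zw a) (hprod (wd v) (wd (z b @ w))) + cat (zw b) (hprod (wd (z a @ v)) (wd w))
     + cat (zw (a + b)) (hprod (wd v) (wd w))" for v w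
    using a b by (simp add: hprod_wd_wd idx_z_append nc_add_eq_plus)
  show ?thesis
    unfolding L R1 R2 R3 key
    by (simp add: cat_sum_right cat_smult_right nc_smult_add_right sum.distrib)
qed

section \<open>Series in u whose coefficients are multiples of single letters z_{ik}\<close>

lemma sum_atMost_triangle:
  "(\<Sum>j\<le>(n::nat). \<Sum>i\<le>j. g i j) = (\<Sum>i\<le>n. \<Sum>l\<le>n - i. g i (i + l))"
proof (induction n)
  case (Suc n)
  have "(\<Sum>i\<le>n. \<Sum>l\<le>Suc n - i. g i (i + l)) = (\<Sum>i\<le>n. (\<Sum>l\<le>n - i. g i (i + l)) + g i (Suc n))"
    by (rule sum.cong) (auto simp: Suc_diff_le)
  then show ?case
    using Suc by (simp add: sum.distrib add.assoc)
qed simp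

lemma sum_atMost_triangle_swap:
  "(\<Sum>j\<le>(n::nat). \<Sum>r\<le>n - j. F j r) = (\<Sum>r\<le>n. \<Sum>j\<le>n - r. F j r)"
proof -
  have "(\<Sum>j\<le>n. \<Sum>r\<le>n - j. F j r) = (\<Sum>j\<in>{..n}. sum (F j) {r\<in>{..n}. j + r \<le> n})"
    by (rule sum.cong) (auto intro!: sum.cong)
  also have "\<dots> = (\<Sum>r\<in>{..n}. \<Sum>j | j \<in> {..n} \<and> j + r \<le> n. F j r)"
    by (rule sum.swap_restrict) auto
  also have "\<dots> = (\<Sum>r\<le>n. \<Sum>j\<le>n - r. F j r)"
    by (rule sum.cong) (auto intro!: sum.cong)
  finally show ?thesis .
qed

definition zk_series :: "nat \<Rightarrow> (nat \<Rightarrow> rat poly) \<Rightarrow> ser" where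
  "zk_series k c = (\<lambda>i. nc_smult (c i) (zw (i * k)))"

definition coeff_conv :: "(nat \<Rightarrow> rat poly) \<Rightarrow> (nat \<Rightarrow> rat poly) \<Rightarrow> nat \<Rightarrow> rat poly" where
  "coeff_conv c d s = (\<Sum>i\<le>s. c i * d (s - i))"

lemma ser_cat_apply: "ser_cat A B n = (\<Sum>i\<le>n. cat (A i) (B (n - i)))"
  by (simp add: ser_cat_def fun_eq_iff sum_fun_apply)

lemma ser_harm_apply: "ser_harm A B n = (\<Sum>i\<le>n. hprod (A i) (B (n - i)))"
  by (simp add: ser_harm_def fun_eq_iff sum_fun_apply)

lemma geom_apply: "geom A n = (\<Sum>m\<le>n. ser_pow A m n)"
  by (simp add: geom_def fun_eq_iff sum_fun_apply)

lemma ser_one_apply: "ser_one n = (if n = 0 then wd [] else 0)"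
  by (simp add: ser_one_def nc_zero_eq_zero)

lemma ser_cat_add_left: "ser_cat (A + A') B = ser_cat A B + ser_cat A' B"
  by (simp add: fun_eq_iff ser_cat_apply cat_add_left sum.distrib)

lemma ser_cat_add_right: "ser_cat A (B + B') = ser_cat A B + ser_cat A B'"
  by (simp add: fun_eq_iff ser_cat_apply cat_add_right sum.distrib)

lemma ser_harm_add_left:
  "(\<And>n. finsupp (A n)) \<Longrightarrow> (\<And>n. finsupp (A' n)) \<Longrightarrow> (\<And>n. finsupp (B n)) \<Longrightarrow>
    ser_harm (A + A') B = ser_harm A B + ser_harm A' B"
  by (simp add: fun_eq_iff ser_harm_apply hprod_add_left sum.distrib)

lemma ser_harm_add_right:
  "(\<And>n. finsupp (A n)) \<Longrightarrow> (\<And>n. finsupp (B n)) \<Longrightarrow> (\<And>n. finsupp (B' n)) \<Longrightarrow>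
    ser_harm A (B + B') = ser_harm A B + ser_harm A B'"
  by (simp add: fun_eq_iff ser_harm_apply hprod_add_right sum.distrib)

lemma ser_harm_one_left:
  assumes "\<And>n. finsupp (B n)" "\<And>n. in_h1 (B n)"
  shows "ser_harm ser_one B = B"
proof
  fix n
  have "ser_harm ser_one B n = (\<Sum>i\<le>n. if i = 0 then B n else 0)"
    unfolding ser_harm_apply ser_one_apply
    by (rule sum.cong) (simp_all add: hprod_wd_Nil_left assms)
  then show "ser_harm ser_one B n = B n"
    by simp
qed

lemma ser_harm_one_right:
  assumes "\<And>n. finsupp (A n)" "\<And>n. in_h1 (A n)"
  shows "ser_harm A ser_one = A"
proof
  fix n
  have "ser_harm A ser_one n = (\<Sum>i\<le>n. if i = n then A n else 0)"
    unfolding ser_harm_apply ser_one_apply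
    by (rule sum.cong) (auto simp: hprod_wd_Nil_right assms)
  then show "ser_harm A ser_one n = A n"
    by simp
qed

lemma zk_series_add:
  "zk_series k c + zk_series k d = zk_series k (\<lambda>s. c s + d s)"
  by (simp add: zk_series_def fun_eq_iff nc_smult_add_left[symmetric])

lemma finsupp_cat_zk_series [simp]: "finsupp g \<Longrightarrow> finsupp (cat (zk_series k c i) g)"
  by (simp add: zk_series_def cat_smult_left zw_def)

lemma in_h1_cat_zk_series [simp]: "in_h1 g \<Longrightarrow> in_h1 (cat (zk_series k c i) g)"
  by (simp add: zk_series_def cat_smult_left)

lemma finsupp_ser_cat_zk_series [simp]:
  "(\<And>n. finsupp (F n)) \<Longrightarrow> finsupp (ser_cat (zk_series k c) F n)"
  by (simp add: ser_cat_apply)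

lemma in_h1_ser_cat_zk_series [simp]:
  "(\<And>n. in_h1 (F n)) \<Longrightarrow> in_h1 (ser_cat (zk_series k c) F n)"
  by (simp add: ser_cat_apply)

lemma finsupp_ser_one [simp]: "finsupp (ser_one n)"
  and in_h1_ser_one [simp]: "in_h1 (ser_one n)"
  by (simp_all add: ser_one_apply in_h1_wd)

lemma ser_pow_zk_series:
  "finsupp (ser_pow (zk_series k c) m n) \<and> in_h1 (ser_pow (zk_series k c) m n)"
  by (induction m arbitrary: n) simp_all

lemma finsupp_geom_zk_series [simp]: "finsupp (geom (zk_series k c) n)"
  and in_h1_geom_zk_series [simp]: "in_h1 (geom (zk_series k c) n)"
  using ser_pow_zk_series by (simp_all add: geom_apply)

lemma ser_pow_eq_0: "A 0 = 0 \<Longrightarrow> n < m \<Longrightarrow> ser_pow A m n = 0"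
proof (induction m arbitrary: n)
  case (Suc m)
  have "cat (A i) (ser_pow A m (n - i)) = 0" if "i \<le> n" for i
  proof (cases "i = 0")
    case False
    then have "n - i < m"
      using Suc that by auto
    then show ?thesis
      using Suc by simp
  qed (use Suc in simp)
  then show ?case
    by (simp add: ser_cat_apply)
qed simp

lemma geom_eq_one_plus_cat:
  assumes A0: "A 0 = 0"
  shows "geom A = ser_one + ser_cat A (geom A)"
proof
  fix n
  show "geom A n = (ser_one + ser_cat A (geom A)) n"
  proof (cases n)
    case 0
    then show ?thesis
      by (simp add: geom_apply ser_cat_apply ser_one_apply A0)
  next
    case (Suc n')
    have "geom A n = (\<Sum>m\<le>n'. ser_pow A (Suc m) n)"
      unfolding geom_apply Suc sum.atMost_Suc_shift by (simp add: ser_one_apply)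
    also have "\<dots> = (\<Sum>m\<le>n'. \<Sum>i\<le>n. cat (A i) (ser_pow A m (n - i)))"
      by (simp add: ser_cat_apply)
    also have "\<dots> = (\<Sum>i\<le>n. cat (A i) (\<Sum>m\<le>n'. ser_pow A m (n - i)))"
      by (subst sum.swap) (simp add: cat_sum_right)
    also have "\<dots> = ser_cat A (geom A) n"
      unfolding ser_cat_apply
    proof (rule sum.cong[OF refl])
      fix i assume "i \<in> {..n}"
      show "cat (A i) (\<Sum>m\<le>n'. ser_pow A m (n - i)) = cat (A i) (geom A (n - i))"
      proof (cases "i = 0")
        case False
        have "(\<Sum>m\<le>n'. ser_pow A m (n - i)) = geom A (n - i)"
          unfolding geom_apply
          by (rule sum.mono_neutral_right) (use False Suc ser_pow_eq_0[where A=A, OF A0] in auto)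
        then show ?thesis
          by simp
      qed (simp add: A0)
    qed
    finally show ?thesis
      using Suc by (simp add: ser_one_apply)
  qed
qed

lemma geom_unique:
  assumes A0: "A 0 = 0" and F: "F = ser_one + ser_cat A F"
  shows "F = geom A"
proof
  fix n show "F n = geom A n"
  proof (induction n rule: less_induct)
    case (less n)
    have "cat (A i) (F (n - i)) = cat (A i) (geom A (n - i))" if "i \<le> n" for i
      using A0 less that by (cases "i = 0") simp_all
    then have "ser_cat A F n = ser_cat A (geom A) n"
      by (simp add: ser_cat_apply)
    then show ?case
      using fun_cong[OF F, of n] fun_cong[OF geom_eq_one_plus_cat[where A=A, OF A0], of n] by simp
  qed
qed

lemma hprod_cat_zk_series:
  assumes k: "1 \<le> k" and c0: "c 0 = 0" and d0: "d 0 = 0" and f: "finsupp f" and g: "finsupp g"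
  shows "hprod (cat (zk_series k c i) f) (cat (zk_series k d r) g) =
    cat (zk_series k c i) (hprod f (cat (zk_series k d r) g))
    + cat (zk_series k d r) (hprod (cat (zk_series k c i) f) g)
    + cat (nc_smult (c i * d r) (zw ((i + r) * k))) (hprod f g)"
proof (cases "i = 0 \<or> r = 0")
  case True
  then show ?thesis
    using c0 d0 f g by (auto simp: zk_series_def cat_smult_left hprod_smult_left hprod_smult_right)
next
  case False
  then have ik: "1 \<le> i * k" and rk: "1 \<le> r * k"
    using k by auto
  have "(i + r) * k = i * k + r * k"
    by (simp add: add_mult_distrib)
  then show ?thesis
    using hprod_cat_zw[OF ik rk f g] f g
    by (simp add: zk_series_def cat_smult_left cat_smult_right hprod_smult_left hprod_smult_right
        nc_smult_add_right mult.commute[of "d r"])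
qed

lemma sum_cat_hprod_cat_left:
  assumes F: "\<And>n. finsupp (F n)" and G: "\<And>n. finsupp (G n)"
  shows "(\<Sum>j\<le>N. \<Sum>i\<le>j. \<Sum>r\<le>N - j.
      cat (zk_series k c i) (hprod (F (j - i)) (cat (zk_series k d r) (G (N - j - r)))))
    = ser_cat (zk_series k c) (ser_harm F (ser_cat (zk_series k d) G)) N"
proof -
  let ?X = "zk_series k c" and ?Y = "zk_series k d"
  have "(\<Sum>j\<le>N. \<Sum>i\<le>j. \<Sum>r\<le>N - j. cat (?X i) (hprod (F (j - i)) (cat (?Y r) (G (N - j - r)))))
      = (\<Sum>j\<le>N. \<Sum>i\<le>j. cat (?X i) (hprod (F (j - i)) (ser_cat ?Y G (N - j))))"
    by (simp add: ser_cat_apply hprod_sum_right cat_sum_right F G)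
  also have "\<dots> = (\<Sum>i\<le>N. \<Sum>l\<le>N - i. cat (?X i) (hprod (F l) (ser_cat ?Y G (N - i - l))))"
    by (subst sum_atMost_triangle) (simp add: diff_diff_add)
  finally show ?thesis
    by (simp add: ser_cat_apply ser_harm_apply cat_sum_right)
qed

lemma sum_cat_hprod_cat_right:
  assumes F: "\<And>n. finsupp (F n)" and G: "\<And>n. finsupp (G n)"
  shows "(\<Sum>j\<le>N. \<Sum>i\<le>j. \<Sum>r\<le>N - j.
      cat (zk_series k d r) (hprod (cat (zk_series k c i) (F (j - i))) (G (N - j - r))))
    = ser_cat (zk_series k d) (ser_harm (ser_cat (zk_series k c) F) G) N"
proof -
  let ?X = "zk_series k c" and ?Y = "zk_series k d"
  have "(\<Sum>j\<le>N. \<Sum>i\<le>j. \<Sum>r\<le>N - j. cat (?Y r) (hprod (cat (?X i) (F (j - i))) (G (N - j - r))))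
      = (\<Sum>j\<le>N. \<Sum>r\<le>N - j. cat (?Y r) (hprod (ser_cat ?X F j) (G (N - j - r))))"
    by (rule sum.cong[OF refl], subst sum.swap)
      (simp add: ser_cat_apply hprod_sum_left cat_sum_right F G)
  also have "\<dots> = (\<Sum>r\<le>N. \<Sum>j\<le>N - r. cat (?Y r) (hprod (ser_cat ?X F j) (G (N - r - j))))"
    by (subst sum_atMost_triangle_swap) (simp add: diff_commute add.commute)
  finally show ?thesis
    by (simp add: ser_cat_apply ser_harm_apply cat_sum_right)
qed

lemma sum_cat_conv_hprod:
  "(\<Sum>j\<le>N. \<Sum>i\<le>j. \<Sum>r\<le>N - j.
      cat (nc_smult (c i * d r) (zw ((i + r) * k))) (hprod (F (j - i)) (G (N - j - r))))
    = ser_cat (zk_series k (coeff_conv c d)) (ser_harm F G) N"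
proof -
  let ?XY = "\<lambda>i r. nc_smult (c i * d r) (zw ((i + r) * k))"
  have conv: "zk_series k (coeff_conv c d) s = (\<Sum>i\<le>s. ?XY i (s - i))" for s
    by (auto simp: zk_series_def coeff_conv_def nc_smult_sum_left intro!: sum.cong)
  have "(\<Sum>j\<le>N. \<Sum>i\<le>j. \<Sum>r\<le>N - j. cat (?XY i r) (hprod (F (j - i)) (G (N - j - r))))
      = (\<Sum>i\<le>N. \<Sum>l\<le>N - i. \<Sum>r\<le>N - i - l. cat (?XY i r) (hprod (F l) (G (N - i - l - r))))"
    by (subst sum_atMost_triangle) (simp add: diff_diff_add)
  also have "\<dots> = (\<Sum>i\<le>N. \<Sum>r\<le>N - i. \<Sum>l\<le>N - i - r. cat (?XY i r) (hprod (F l) (G (N - i - r - l))))"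
    by (rule sum.cong[OF refl], subst sum_atMost_triangle_swap) (simp add: diff_commute add_ac)
  also have "\<dots> = (\<Sum>i\<le>N. \<Sum>r\<le>N - i. cat (?XY i r) (ser_harm F G (N - i - r)))"
    by (simp add: ser_harm_apply cat_sum_right)
  also have "\<dots> = (\<Sum>s\<le>N. \<Sum>i\<le>s. cat (?XY i (s - i)) (ser_harm F G (N - s)))"
    by (subst sum_atMost_triangle) (simp add: diff_diff_add)
  finally show ?thesis
    by (simp add: ser_cat_apply conv cat_sum_left)
qed

lemma ser_harm_ser_cat_zk_series:
  assumes k: "1 \<le> k" and c0: "c 0 = 0" and d0: "d 0 = 0"
    and F: "\<And>n. finsupp (F n)" and G: "\<And>n. finsupp (G n)"
  shows "ser_harm (ser_cat (zk_series k c) F) (ser_cat (zk_series k d) G) =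
    ser_cat (zk_series k c) (ser_harm F (ser_cat (zk_series k d) G))
    + ser_cat (zk_series k d) (ser_harm (ser_cat (zk_series k c) F) G)
    + ser_cat (zk_series k (coeff_conv c d)) (ser_harm F G)"
proof
  fix N
  let ?X = "zk_series k c" and ?Y = "zk_series k d"
  have "ser_harm (ser_cat ?X F) (ser_cat ?Y G) N = (\<Sum>j\<le>N. \<Sum>i\<le>j. \<Sum>r\<le>N - j.
      hprod (cat (?X i) (F (j - i))) (cat (?Y r) (G (N - j - r))))"
    by (simp add: ser_harm_apply ser_cat_apply hprod_sum_sum F G)
  also have "\<dots> =
      (\<Sum>j\<le>N. \<Sum>i\<le>j. \<Sum>r\<le>N - j. cat (?X i) (hprod (F (j - i)) (cat (?Y r) (G (N - j - r)))))
    + (\<Sum>j\<le>N. \<Sum>i\<le>j. \<Sum>r\<le>N - j. cat (?Y r) (hprod (cat (?X i) (F (j - i))) (G (N - j - r))))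
    + (\<Sum>j\<le>N. \<Sum>i\<le>j. \<Sum>r\<le>N - j.
        cat (nc_smult (c i * d r) (zw ((i + r) * k))) (hprod (F (j - i)) (G (N - j - r))))"
    by (simp add: hprod_cat_zk_series[where c=c and d=d, OF k c0 d0] F G sum.distrib)
  finally show "ser_harm (ser_cat ?X F) (ser_cat ?Y G) N =
      (ser_cat ?X (ser_harm F (ser_cat ?Y G)) + ser_cat ?Y (ser_harm (ser_cat ?X F) G)
      + ser_cat (zk_series k (coeff_conv c d)) (ser_harm F G)) N"
    by (simp only: plus_fun_apply sum_cat_conv_hprod sum_cat_hprod_cat_left[where F=F and G=G, OF F G]
        sum_cat_hprod_cat_right[where F=F and G=G, OF F G])
qed

lemma ser_harm_geom_zk_series:
  assumes k: "1 \<le> k" and c0: "c 0 = 0" and d0: "d 0 = 0"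
  shows "ser_harm (geom (zk_series k c)) (geom (zk_series k d))
    = geom (zk_series k (\<lambda>s. c s + d s + coeff_conv c d s))"
proof -
  let ?X = "zk_series k c" and ?Y = "zk_series k d" and ?Z = "zk_series k (coeff_conv c d)"
  define G where "G = geom ?X"
  define B where "B = geom ?Y"
  define C where "C = ser_harm G B"
  have G_rec: "G = ser_one + ser_cat ?X G"
    unfolding G_def by (rule geom_eq_one_plus_cat) (simp add: zk_series_def c0)
  have B_rec: "B = ser_one + ser_cat ?Y B"
    unfolding B_def by (rule geom_eq_one_plus_cat) (simp add: zk_series_def d0)
  have [simp]: "finsupp (G n)" "in_h1 (G n)" "finsupp (B n)" "in_h1 (B n)" for n
    by (simp_all add: G_def B_def)
  have XC: "ser_cat ?X C = ser_cat ?X G + ser_cat ?X (ser_harm G (ser_cat ?Y B))"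
  proof -
    have "C = ser_harm G (ser_one + ser_cat ?Y B)"
      unfolding C_def by (rule arg_cong[OF B_rec])
    then have "C = G + ser_harm G (ser_cat ?Y B)"
      by (simp add: ser_harm_add_right ser_harm_one_right)
    then show ?thesis
      by (simp add: ser_cat_add_right)
  qed
  have YC: "ser_cat ?Y C = ser_cat ?Y B + ser_cat ?Y (ser_harm (ser_cat ?X G) B)"
  proof -
    have "C = ser_harm (ser_one + ser_cat ?X G) B"
      unfolding C_def by (rule arg_cong[OF G_rec])
    then have "C = B + ser_harm (ser_cat ?X G) B"
      by (simp add: ser_harm_add_left ser_harm_one_left)
    then show ?thesis
      by (simp add: ser_cat_add_right)
  qed
  have "C = ser_harm (ser_one + ser_cat ?X G) (ser_one + ser_cat ?Y B)"
    unfolding C_def by (simp only: G_rec[symmetric] B_rec[symmetric])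
  also have "\<dots> = ser_one + ser_cat ?X G + ser_cat ?Y B + ser_harm (ser_cat ?X G) (ser_cat ?Y B)"
    by (simp add: ser_harm_add_left ser_harm_add_right ser_harm_one_left ser_harm_one_right add_ac)
  also have "\<dots> = ser_one + (ser_cat ?X C + ser_cat ?Y C + ser_cat ?Z C)"
    by (simp add: ser_harm_ser_cat_zk_series[where c=c and d=d, OF k c0 d0] C_def[symmetric] XC YC add_ac)
  also have "\<dots> = ser_one + ser_cat (zk_series k (\<lambda>s. c s + d s + coeff_conv c d s)) C"
    by (simp only: zk_series_add[symmetric] ser_cat_add_left)
  finally have "C = ser_one + ser_cat (zk_series k (\<lambda>s. c s + d s + coeff_conv c d s)) C" .
  then show ?thesis
    unfolding C_def G_def B_def
    by (rule geom_unique[rotated]) (simp add: zk_series_def coeff_conv_def c0 d0)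
qed

section \<open>The maps S_s on powers of z_k\<close>

lemma S_map_wd: "S_map s (wd w) = S_word s w"
  by (simp add: S_map_def lin_def fun_eq_iff)

lemma sigma_word_append: "sigma_word s (u @ v) = cat (sigma_word s u) (sigma_word s v)"
  by (induction u) (simp_all add: cat_assoc)

lemma sigma_word_replicate_Lx: "sigma_word s (replicate n Lx) = wd (replicate n Lx)"
  by (induction n) simp_all

lemma S_word_append: "w \<noteq> [] \<Longrightarrow> S_word s (u @ w) = cat (sigma_word s u) (S_word s w)"
  by (simp add: S_word_def butlast_append sigma_word_append cat_assoc)

lemma sigma_word_z:
  assumes "1 \<le> k"
  shows "sigma_word s (z k) = nc_smult s (wd (replicate k Lx)) + zw k"
proof -
  have "sigma_word s (z k) = cat (wd (replicate (k - 1) Lx)) (sigma_word s [Ly])"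
    by (simp add: z_def sigma_word_append sigma_word_replicate_Lx)
  also have "sigma_word s [Ly] = nc_smult s (wd [Lx]) + wd [Ly]"
    by (simp add: nc_add_eq_plus)
  also have "cat (wd (replicate (k - 1) Lx)) (nc_smult s (wd [Lx]) + wd [Ly])
      = nc_smult s (wd (replicate (k - 1) Lx @ [Lx])) + wd (z k)"
    by (simp add: cat_add_right cat_smult_right z_def)
  also have "replicate (k - 1) Lx @ [Lx] = replicate k Lx"
    using assms by (metis Suc_diff_1 less_le_trans zero_less_one replicate_Suc replicate_append_same)
  finally show ?thesis
    by (simp only: zw_def)
qed

lemma S_word_zk_pow_Suc_Suc:
  assumes k: "1 \<le> k"
  shows "S_word s (concat (replicate (Suc (Suc m)) (z k))) =
    cat (zw k) (S_word s (concat (replicate (Suc m) (z k))))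
    + nc_smult s (cat (wd (replicate k Lx)) (S_word s (concat (replicate (Suc m) (z k)))))"
proof -
  have "concat (replicate (Suc m) (z k)) \<noteq> []"
    by (simp add: z_def)
  from S_word_append[OF this, of s "z k"] show ?thesis
    by (simp add: sigma_word_z[OF k] cat_add_left cat_smult_left add.commute)
qed

lemma S_word_zk_pow_eqI:
  assumes k: "1 \<le> k" and F0: "F 0 = wd []" and F1: "F (Suc 0) = zw k"
    and F: "\<And>m. F (Suc (Suc m)) =
      cat (zw k) (F (Suc m)) + nc_smult s (cat (wd (replicate k Lx)) (F (Suc m)))"
  shows "S_word s (concat (replicate n (z k))) = F n"
proof -
  have "S_word s (concat (replicate n (z k))) = F n
    \<and> S_word s (concat (replicate (Suc n) (z k))) = F (Suc n)"
  proof (induction n)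
    case 0
    then show ?case
      by (simp add: S_word_def F0 F1 z_def sigma_word_replicate_Lx zw_def)
  next
    case (Suc n)
    then show ?case
      by (simp only: S_word_zk_pow_Suc_Suc[OF k] F)
  qed
  then show ?thesis ..
qed

definition S_coeff :: "rat poly \<Rightarrow> nat \<Rightarrow> rat poly" where
  "S_coeff s r = (if 1 \<le> r then s ^ (r - 1) else 0)"

lemma geom_S_coeff_Suc:
  "geom (zk_series k (S_coeff s)) (Suc N) =
    (\<Sum>i\<le>N. nc_smult (s ^ i) (cat (zw (Suc i * k)) (geom (zk_series k (S_coeff s)) (N - i))))"
proof -
  let ?Y = "zk_series k (S_coeff s)"
  have Y0: "?Y 0 = 0"
    by (simp add: zk_series_def S_coeff_def)
  have "geom ?Y (Suc N) = ser_one (Suc N) + (\<Sum>i\<le>Suc N. cat (?Y i) (geom ?Y (Suc N - i)))"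
    using fun_cong[OF geom_eq_one_plus_cat[where A="?Y", OF Y0], of "Suc N"]
    unfolding plus_fun_apply ser_cat_apply .
  also have "\<dots> = (\<Sum>i\<le>N. cat (?Y (Suc i)) (geom ?Y (N - i)))"
    unfolding sum.atMost_Suc_shift by (simp add: ser_one_apply Y0)
  also have "\<dots> = (\<Sum>i\<le>N. nc_smult (s ^ i) (cat (zw (Suc i * k)) (geom ?Y (N - i))))"
    by (simp add: zk_series_def S_coeff_def cat_smult_left)
  finally show ?thesis .
qed

lemma geom_S_coeff_0: "geom (zk_series k (S_coeff s)) 0 = wd []"
  by (simp add: geom_apply ser_one_apply)

lemma geom_S_coeff_1: "geom (zk_series k (S_coeff s)) (Suc 0) = zw k"
  using geom_S_coeff_Suc[of k s 0] by (simp add: geom_S_coeff_0)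

lemma geom_S_coeff_Suc_Suc:
  assumes k: "1 \<le> k"
  shows "geom (zk_series k (S_coeff s)) (Suc (Suc m)) =
    cat (zw k) (geom (zk_series k (S_coeff s)) (Suc m))
    + nc_smult s (cat (wd (replicate k Lx)) (geom (zk_series k (S_coeff s)) (Suc m)))"
proof -
  let ?Q = "geom (zk_series k (S_coeff s))"
  have shift: "cat (wd (replicate k Lx)) (cat (zw (Suc i * k)) f) = cat (zw (Suc (Suc i) * k)) f"
    for i f
    using k by (simp add: cat_assoc zw_def replicate_Lx_append_z)
  have "?Q (Suc (Suc m)) = nc_smult (s ^ 0) (cat (zw (Suc 0 * k)) (?Q (Suc m - 0)))
      + (\<Sum>i\<le>m. nc_smult (s ^ Suc i) (cat (zw (Suc (Suc i) * k)) (?Q (Suc m - Suc i))))"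
    unfolding geom_S_coeff_Suc[of k s "Suc m"] by (rule sum.atMost_Suc_shift)
  also have "(\<Sum>i\<le>m. nc_smult (s ^ Suc i) (cat (zw (Suc (Suc i) * k)) (?Q (Suc m - Suc i))))
      = (\<Sum>i\<le>m. nc_smult s (cat (wd (replicate k Lx))
          (nc_smult (s ^ i) (cat (zw (Suc i * k)) (?Q (m - i))))))"
    by (rule sum.cong[OF refl]) (simp only: cat_smult_right nc_smult_nc_smult shift diff_Suc_Suc power_Suc)
  also have "\<dots> = nc_smult s (cat (wd (replicate k Lx)) (?Q (Suc m)))"
    by (simp only: geom_S_coeff_Suc[of k s m] cat_sum_right nc_smult_sum_right)
  finally show ?thesis
    by (simp only: power_0 nc_smult_one mult_Suc mult_0 add_0_right diff_zero)
qed

lemma S_word_zk_pow_eq_geom: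
  "1 \<le> k \<Longrightarrow> S_word s (concat (replicate n (z k))) = geom (zk_series k (S_coeff s)) n"
  by (rule S_word_zk_pow_eqI[OF _ geom_S_coeff_0 geom_S_coeff_1 geom_S_coeff_Suc_Suc[of k s]])

lemma coarsen_ne_Nil: "p \<in> set (coarsen ks) \<Longrightarrow> ks \<noteq> [] \<Longrightarrow> p \<noteq> []"
  by (induction ks arbitrary: p rule: coarsen.induct) auto

lemma length_coarsen_le: "p \<in> set (coarsen ks) \<Longrightarrow> length p \<le> length ks"
proof (induction ks arbitrary: p rule: coarsen.induct)
  case (3 k l ks)
  then obtain q where "q \<in> set (coarsen (l # ks))" and "p = k # q \<or> p = (k + hd q) # tl q"
    by auto
  with "3.IH" show ?case
    by fastforce
qed auto

lemma coarsen_lower_bound: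
  "p \<in> set (coarsen ks) \<Longrightarrow> \<forall>x\<in>set ks. c \<le> x \<Longrightarrow> \<forall>x\<in>set p. c \<le> x"
proof (induction ks arbitrary: p rule: coarsen.induct)
  case (3 k l ks)
  from 3(3) obtain q where q: "q \<in> set (coarsen (l # ks))"
    and pq: "p = k # q \<or> p = (k + hd q) # tl q"
    by auto
  have "\<forall>x\<in>set q. c \<le> x"
    using 3 q by auto
  moreover have "q \<noteq> []"
    using coarsen_ne_Nil q by blast
  ultimately show ?case
    using pq 3(4) by (cases q) auto
qed auto

definition coarsen_sum :: "nat \<Rightarrow> rat poly \<Rightarrow> nat \<Rightarrow> nc" where
  "coarsen_sum k s n =
    sum_list (map (\<lambda>p. nc_smult (s ^ (n - length p)) (wd (zs p))) (coarsen (replicate n k)))"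

lemma coarsen_sum_0: "coarsen_sum k s 0 = wd []"
  by (simp add: coarsen_sum_def)

lemma coarsen_sum_1: "coarsen_sum k s (Suc 0) = zw k"
  by (simp add: coarsen_sum_def zs_def zw_def)

lemma coarsen_sum_Suc_Suc:
  assumes k: "1 \<le> k"
  shows "coarsen_sum k s (Suc (Suc m)) = cat (zw k) (coarsen_sum k s (Suc m))
    + nc_smult s (cat (wd (replicate k Lx)) (coarsen_sum k s (Suc m)))"
proof -
  define L where "L = coarsen (replicate (Suc m) k)"
  let ?term = "\<lambda>n p. nc_smult (s ^ (n - length p)) (wd (zs p))"
  have L: "coarsen (replicate (Suc (Suc m)) k) = map ((#) k) L @ map (\<lambda>p. (k + hd p) # tl p) L"
    by (simp add: L_def)
  have p: "p \<noteq> []" "length p \<le> Suc m" "\<forall>x\<in>set p. 1 \<le> x" if "p \<in> set L" for p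
  proof -
    show "p \<noteq> []"
      using coarsen_ne_Nil[of p "replicate (Suc m) k"] that by (simp add: L_def)
    show "length p \<le> Suc m"
      using length_coarsen_le[of p "replicate (Suc m) k"] that by (simp add: L_def)
    show "\<forall>x\<in>set p. 1 \<le> x"
      using coarsen_lower_bound[of p "replicate (Suc m) k" 1] that k by (simp add: L_def)
  qed
  have new_letter: "sum_list (map (?term (Suc (Suc m))) (map ((#) k) L))
      = cat (zw k) (coarsen_sum k s (Suc m))"
    unfolding coarsen_sum_def L_def[symmetric] cat_sum_list_right
    by (simp add: o_def cat_smult_right zw_def zs_Cons)
  have merged_letter: "?term (Suc (Suc m)) ((k + hd p) # tl p)
      = nc_smult s (cat (wd (replicate k Lx)) (?term (Suc m) p))" if pL: "p \<in> set L" for p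
  proof -
    obtain a q where "p = a # q" "1 \<le> a" "length q \<le> m"
      using p[OF pL] by (cases p) auto
    then show ?thesis
      using replicate_Lx_append_z[of a k]
      by (simp add: zs_Cons cat_smult_right Suc_diff_le flip: append_assoc)
  qed
  have "sum_list (map (?term (Suc (Suc m))) (map (\<lambda>p. (k + hd p) # tl p) L))
      = nc_smult s (cat (wd (replicate k Lx)) (coarsen_sum k s (Suc m)))"
    unfolding coarsen_sum_def L_def[symmetric] cat_sum_list_right nc_smult_sum_list_right map_map
    by (rule arg_cong[where f=sum_list], rule map_cong[OF refl]) (simp only: o_def merged_letter)
  then show ?thesis
    unfolding coarsen_sum_def[of k s "Suc (Suc m)"] L sum_list_append map_append
    using new_letter by (simp add: coarsen_sum_def)
qed

lemma S_word_zk_pow_eq_coarsen_sum: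
  "1 \<le> k \<Longrightarrow> S_word s (concat (replicate n (z k))) = coarsen_sum k s n"
  by (rule S_word_zk_pow_eqI[OF _ coarsen_sum_0 coarsen_sum_1 coarsen_sum_Suc_Suc[of k s]])

section \<open>The generating series identity\<close>

lemma ser_pow_zu: "ser_pow (zu k) m n = (if m = n then wd (concat (replicate n (z k))) else 0)"
proof (induction m arbitrary: n)
  case 0
  then show ?case
    by (simp add: ser_one_apply)
next
  case (Suc m)
  have zu: "zu k i = (if i = 1 then zw k else 0)" for i
    by (simp add: zu_def nc_zero_eq_zero)
  have "ser_pow (zu k) (Suc m) n = (\<Sum>i\<le>n. cat (zu k i) (ser_pow (zu k) m (n - i)))"
    by (simp add: ser_cat_apply)
  also have "\<dots> = (\<Sum>i\<le>n. if i = 1 then cat (zw k) (ser_pow (zu k) m (n - 1)) else 0)"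
    by (rule sum.cong) (auto simp: zu)
  also have "\<dots> = (if 1 \<le> n then cat (zw k) (ser_pow (zu k) m (n - 1)) else 0)"
    by (simp add: sum.delta)
  also have "\<dots> = (if Suc m = n then wd (concat (replicate n (z k))) else 0)"
    using Suc by (cases n) (auto simp: zw_def)
  finally show ?case .
qed

lemma geom_zu: "geom (zu k) n = wd (concat (replicate n (z k)))"
  by (simp add: geom_apply ser_pow_zu)

lemma ser_S_geom_zu: "1 \<le> k \<Longrightarrow> ser_S s (geom (zu k)) = geom (zk_series k (S_coeff s))"
  by (simp add: fun_eq_iff ser_S_def geom_zu S_map_wd S_word_zk_pow_eq_geom)

definition X_coeff :: "nat \<Rightarrow> rat poly" where
  "X_coeff i = (if 2 \<le> i then tvar ^ (i - 2) * (tvar - 1) else 0)"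

lemma Xser_eq_zk_series: "Xser k = zk_series k X_coeff"
  by (simp add: fun_eq_iff Xser_def zk_series_def X_coeff_def nc_zero_eq_zero)

lemma one_plus_sum_X_coeff: "1 \<le> s \<Longrightarrow> 1 + (\<Sum>i\<le>s. X_coeff i) = tvar ^ (s - 1)"
proof (induction s rule: dec_induct)
  case (step s)
  have "1 + (\<Sum>i\<le>Suc s. X_coeff i) = tvar ^ (s - 1) + X_coeff (Suc s)"
    using step by (simp add: add.assoc[symmetric])
  also have "\<dots> = tvar ^ (s - 1) * tvar"
    using step by (simp add: X_coeff_def algebra_simps)
  also have "\<dots> = tvar ^ (Suc s - 1)"
    using step by (metis Suc_diff_le diff_Suc_1 power_Suc2)
  finally show ?case .
qed (simp add: X_coeff_def)

lemma X_coeff_S_coeff_one: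
  "X_coeff s + S_coeff 1 s + coeff_conv X_coeff (S_coeff 1) s = S_coeff tvar s"
proof (cases "s = 0")
  case False
  have "coeff_conv X_coeff (S_coeff 1) s = (\<Sum>i<s. X_coeff i)"
    unfolding coeff_conv_def lessThan_Suc_atMost[symmetric] sum.lessThan_Suc
    by (auto simp: S_coeff_def X_coeff_def intro!: sum.cong)
  then have "X_coeff s + S_coeff 1 s + coeff_conv X_coeff (S_coeff 1) s = 1 + (\<Sum>i\<le>s. X_coeff i)"
    using False by (simp add: S_coeff_def lessThan_Suc_atMost[symmetric] algebra_simps)
  then show ?thesis
    using one_plus_sum_X_coeff[of s] False by (simp add: S_coeff_def)
qed (simp add: X_coeff_def S_coeff_def coeff_conv_def)

theorem ser_S_geom_zu_eq_ser_harm: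
  assumes "1 \<le> k"
  shows "ser_S tvar (geom (zu k)) = ser_harm (geom (Xser k)) (ser_S 1 (geom (zu k)))"
proof -
  have "(\<lambda>s. X_coeff s + S_coeff 1 s + coeff_conv X_coeff (S_coeff 1) s) = S_coeff tvar"
    by (simp add: fun_eq_iff X_coeff_S_coeff_one)
  moreover have "X_coeff 0 = 0" "S_coeff 1 0 = 0"
    by (simp_all add: X_coeff_def S_coeff_def)
  ultimately show ?thesis
    using ser_harm_geom_zk_series[OF assms, of X_coeff "S_coeff 1"] assms
    by (simp add: ser_S_geom_zu Xser_eq_zk_series)
qed

section \<open>Expansion of the geometric series by compositions\<close>

definition comp_weight :: "nat \<Rightarrow> nat \<Rightarrow> rat poly" where
  "comp_weight m j = tvar ^ (j - 2 * m) * (tvar - 1) ^ m"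

definition zk_comps :: "nat \<Rightarrow> nat \<Rightarrow> nat \<Rightarrow> nc" where
  "zk_comps k m j = (\<Sum>is\<in>comps m j. wd (zs (map (\<lambda>i. i * k) is)))"

lemma comps_0: "comps 0 j = (if j = 0 then {[]} else {})"
  by (auto simp: comps_def)

lemma comps_Suc: "comps (Suc m) j = (\<Union>i\<in>{2..j}. (\<lambda>is. i # is) ` comps m (j - i))"
proof
  show "comps (Suc m) j \<subseteq> (\<Union>i\<in>{2..j}. (\<lambda>is. i # is) ` comps m (j - i))"
  proof
    fix xs assume xs: "xs \<in> comps (Suc m) j"
    then obtain i r where ir: "xs = i # r" by (cases xs) (auto simp: comps_def)
    then have "length r = m" "i + sum_list r = j" "2 \<le> i" "\<forall>x\<in>set r. 2 \<le> x"
      using xs by (auto simp: comps_def)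
    then have "i \<in> {2..j}" "r \<in> comps m (j - i)" by (auto simp: comps_def)
    then show "xs \<in> (\<Union>i\<in>{2..j}. (\<lambda>is. i # is) ` comps m (j - i))"
      using ir by blast
  qed
  show "(\<Union>i\<in>{2..j}. (\<lambda>is. i # is) ` comps m (j - i)) \<subseteq> comps (Suc m) j"
    by (auto simp: comps_def)
qed

lemma finite_comps [simp]: "finite (comps m j)"
  by (induction m arbitrary: j) (auto simp: comps_0 comps_Suc)

lemma comps_length_bound: "is \<in> comps m j \<Longrightarrow> 2 * m \<le> j"
proof -
  have "\<forall>x\<in>set xs. 2 \<le> x \<Longrightarrow> 2 * length xs \<le> sum_list xs" for xs :: "nat list"
    by (induction xs) auto
  then show "is \<in> comps m j \<Longrightarrow> 2 * m \<le> j"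
    by (auto simp: comps_def)
qed

lemma finsupp_zk_comps [simp]: "finsupp (zk_comps k m j)"
  by (simp add: zk_comps_def)

lemma zk_comps_eq_0: "\<not> 2 * m \<le> j \<Longrightarrow> zk_comps k m j = 0"
  unfolding zk_comps_def using comps_length_bound by (metis all_not_in_conv sum.empty)

lemma X_coeff_mult_comp_weight:
  assumes "2 \<le> i" "i \<le> j" "2 * m \<le> j - i"
  shows "X_coeff i * comp_weight m (j - i) = comp_weight (Suc m) j"
proof -
  have e: "j - 2 * Suc m = (i - 2) + (j - i - 2 * m)"
    using assms by auto
  have "X_coeff i * comp_weight m (j - i)
      = (tvar ^ (i - 2) * (tvar - 1)) * (tvar ^ (j - i - 2 * m) * (tvar - 1) ^ m)"
    using assms by (simp add: X_coeff_def comp_weight_def)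
  also have "\<dots> = tvar ^ ((i - 2) + (j - i - 2 * m)) * (tvar - 1) ^ Suc m"
    by (simp only: power_add power_Suc mult_ac)
  also have "\<dots> = comp_weight (Suc m) j"
    by (simp only: comp_weight_def e)
  finally show ?thesis .
qed

lemma zk_comps_Suc:
  "zk_comps k (Suc m) j = (\<Sum>i\<in>{2..j}. cat (zw (i * k)) (zk_comps k m (j - i)))"
proof -
  define W where "W xs = wd (zs (map (\<lambda>i. i * k) xs))" for xs
  have "zk_comps k (Suc m) j = (\<Sum>i\<in>{2..j}. sum W ((\<lambda>is. i # is) ` comps m (j - i)))"
    unfolding zk_comps_def comps_Suc W_def[symmetric]
    by (rule sum.UNION_disjoint) auto
  also have "\<dots> = (\<Sum>i\<in>{2..j}. \<Sum>r\<in>comps m (j - i). W (i # r))"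
    by (rule sum.cong[OF refl]) (simp add: sum.reindex)
  also have "\<dots> = (\<Sum>i\<in>{2..j}. cat (zw (i * k)) (zk_comps k m (j - i)))"
    by (simp add: zk_comps_def cat_sum_right zw_def W_def zs_Cons)
  finally show ?thesis .
qed

lemma ser_pow_Xser: "ser_pow (Xser k) m j = nc_smult (comp_weight m j) (zk_comps k m j)"
proof (induction m arbitrary: j)
  case 0
  then show ?case
    by (simp add: ser_one_def nc_zero_eq_zero comps_0 zk_comps_def comp_weight_def fun_eq_iff)
next
  case (Suc m)
  have Xser: "Xser k i = nc_smult (X_coeff i) (zw (i * k))" for i
    by (simp add: Xser_eq_zk_series zk_series_def)
  have "ser_pow (Xser k) (Suc m) j
      = (\<Sum>i\<le>j. nc_smult (X_coeff i * comp_weight m (j - i)) (cat (zw (i * k)) (zk_comps k m (j - i))))"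
    unfolding ser_pow.simps ser_cat_apply
    by (rule sum.cong[OF refl]) (simp only: Xser Suc cat_smult_left cat_smult_right nc_smult_nc_smult mult.commute)
  also have "\<dots> = (\<Sum>i\<in>{2..j}.
      nc_smult (X_coeff i * comp_weight m (j - i)) (cat (zw (i * k)) (zk_comps k m (j - i))))"
    by (rule sum.mono_neutral_right) (auto simp: X_coeff_def)
  also have "\<dots> = (\<Sum>i\<in>{2..j}. nc_smult (comp_weight (Suc m) j) (cat (zw (i * k)) (zk_comps k m (j - i))))"
  proof (rule sum.cong[OF refl])
    fix i assume "i \<in> {2..j}"
    then show "nc_smult (X_coeff i * comp_weight m (j - i)) (cat (zw (i * k)) (zk_comps k m (j - i)))
        = nc_smult (comp_weight (Suc m) j) (cat (zw (i * k)) (zk_comps k m (j - i)))"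
      by (cases "2 * m \<le> j - i") (simp_all add: X_coeff_mult_comp_weight zk_comps_eq_0)
  qed
  also have "\<dots> = nc_smult (comp_weight (Suc m) j) (zk_comps k (Suc m) j)"
    by (simp add: zk_comps_Suc nc_smult_sum_right)
  finally show ?case .
qed

lemma geom_Xser: "geom (Xser k) j = (\<Sum>m\<le>j. nc_smult (comp_weight m j) (zk_comps k m j))"
  by (simp add: geom_apply ser_pow_Xser)

lemma geom_Xser_0: "geom (Xser k) 0 = wd []"
  by (simp add: geom_Xser zk_comps_def comps_0 comp_weight_def)

lemma geom_Xser_1: "geom (Xser k) (Suc 0) = 0"
  by (simp add: geom_Xser zk_comps_def comps_0 comps_Suc)

lemma geom_Xser_ge_2: assumes j: "2 \<le> j"
  shows "geom (Xser k) j = (\<Sum>m\<in>{1..j div 2}. nc_smult (comp_weight m j) (zk_comps k m j))"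
  unfolding geom_Xser
proof (rule sum.mono_neutral_right)
  show "\<forall>m\<in>{..j} - {1..j div 2}. nc_smult (comp_weight m j) (zk_comps k m j) = 0"
  proof
    fix m assume m: "m \<in> {..j} - {1..j div 2}"
    show "nc_smult (comp_weight m j) (zk_comps k m j) = 0"
    proof (cases "m = 0")
      case True then show ?thesis using j by (simp add: zk_comps_def comps_0)
    next
      case False then have "\<not> 2 * m \<le> j" using m by auto
      then show ?thesis by (simp add: zk_comps_eq_0)
    qed
  qed
qed auto

lemma sum_atMost_skip_1:
  fixes f :: "nat \<Rightarrow> 'a::comm_monoid_add"
  assumes "f (Suc 0) = 0"
  shows "(\<Sum>j\<le>n. f j) = f 0 + (\<Sum>j\<in>{2..n}. f j)"
proof -
  have "(\<Sum>j\<le>n. f j) = (\<Sum>j\<in>insert 0 {2..n}. f j)"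
    by (rule sum.mono_neutral_right) (use assms in \<open>auto simp: not_le\<close>, metis One_nat_def less_2_cases le_0_eq)
  then show ?thesis
    by simp
qed

lemma S_map_zk_pow:
  "1 \<le> k \<Longrightarrow> S_map s (wd (concat (replicate n (z k)))) = geom (zk_series k (S_coeff s)) n"
  by (simp add: S_map_wd S_word_zk_pow_eq_geom)

lemma zk_comps_eq_fun: "(\<lambda>v. \<Sum>is\<in>comps m j. wd (zs (map (\<lambda>i. i * k) is)) v) = zk_comps k m j"
  by (simp add: zk_comps_def fun_eq_iff sum_fun_apply)

theorem S_map_tvar_zk_pow:
  assumes k: "1 \<le> k"
  shows "S_map tvar (wd (concat (replicate n (z k)))) = S_map 1 (wd (concat (replicate n (z k))))
    + (\<Sum>j\<in>{2..n}. \<Sum>m\<in>{1..j div 2}.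
        nc_smult (comp_weight m j) (hprod (zk_comps k m j) (S_map 1 (wd (concat (replicate (n - j) (z k)))))))"
proof -
  let ?B = "geom (zk_series k (S_coeff 1))"
  have "S_map tvar (wd (concat (replicate n (z k)))) = ser_harm (geom (Xser k)) (ser_S 1 (geom (zu k))) n"
    using fun_cong[OF ser_S_geom_zu_eq_ser_harm[OF k], of n] by (simp add: ser_S_def geom_zu)
  also have "\<dots> = (\<Sum>j\<le>n. hprod (geom (Xser k) j) (?B (n - j)))"
    by (simp add: ser_harm_apply ser_S_geom_zu[OF k])
  also have "\<dots> = hprod (geom (Xser k) 0) (?B (n - 0)) + (\<Sum>j\<in>{2..n}. hprod (geom (Xser k) j) (?B (n - j)))"
    by (rule sum_atMost_skip_1) (simp add: geom_Xser_1)
  also have "hprod (geom (Xser k) 0) (?B (n - 0)) = ?B n"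
    by (simp add: geom_Xser_0 hprod_wd_Nil_left)
  also have "(\<Sum>j\<in>{2..n}. hprod (geom (Xser k) j) (?B (n - j)))
      = (\<Sum>j\<in>{2..n}. \<Sum>m\<in>{1..j div 2}. nc_smult (comp_weight m j) (hprod (zk_comps k m j) (?B (n - j))))"
    by (rule sum.cong[OF refl]) (simp add: geom_Xser_ge_2 hprod_sum_left hprod_smult_left)
  finally show ?thesis
    by (simp only: S_map_zk_pow[OF k])
qed

lemma finite_subset_exhausting:
  assumes mono: "\<And>N N'. N \<le> N' \<Longrightarrow> D N \<subseteq> D N'" and ex: "\<And>x. x \<in> A \<Longrightarrow> \<exists>N. x \<in> D N"
  shows "finite F \<Longrightarrow> F \<subseteq> A \<Longrightarrow> \<exists>N. F \<subseteq> D (N :: nat)"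
proof (induction F rule: finite_induct)
  case (insert x F)
  then obtain N1 N2 where "F \<subseteq> D N1" "x \<in> D N2"
    using ex by blast
  then have "insert x F \<subseteq> D (max N1 N2)"
    using mono[of N1 "max N1 N2"] mono[of N2 "max N1 N2"] by auto
  then show ?case ..
qed simp

lemma infsum_eq_lim_exhausting:
  fixes f :: "'a \<Rightarrow> real"
  assumes fin: "\<And>N. finite (D N)" and sub: "\<And>N. D N \<subseteq> A"
    and mono: "\<And>N N'. N \<le> N' \<Longrightarrow> D N \<subseteq> D N'"
    and ex: "\<And>x. x \<in> A \<Longrightarrow> \<exists>N. x \<in> D N" and nonneg: "\<And>x. x \<in> A \<Longrightarrow> 0 \<le> f x"
    and lim: "(\<lambda>N. sum f (D N)) \<longlonglongrightarrow> L"
  shows "infsum f A = L"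
proof -
  note cover = finite_subset_exhausting[of D A, OF mono ex]
  have inc: "incseq (\<lambda>N. sum f (D N))"
    by (rule incseq_SucI, rule sum_mono2[OF fin mono]) (use sub nonneg in auto)
  have "bdd_above (sum f ` {F. F \<subseteq> A \<and> finite F})"
  proof (rule bdd_aboveI2)
    fix F assume "F \<in> {F. F \<subseteq> A \<and> finite F}"
    then obtain N where N: "F \<subseteq> D N"
      using cover by blast
    have "sum f F \<le> sum f (D N)"
      by (rule sum_mono2[OF fin N]) (use sub nonneg in auto)
    then show "sum f F \<le> L"
      using incseq_le[OF inc lim, of N] by linarith
  qed
  then have "(sum f \<longlongrightarrow> infsum f A) (finite_subsets_at_top A)"
    using has_sum_infsum[OF nonneg_bdd_above_summable_on[OF nonneg]] by (simp add: has_sum_def)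
  moreover have "filterlim D (finite_subsets_at_top A) sequentially"
    unfolding filterlim_finite_subsets_at_top
  proof (intro allI impI)
    fix X assume "finite X \<and> X \<subseteq> A"
    then obtain N0 where "X \<subseteq> D N0"
      using cover by blast
    then show "\<forall>\<^sub>F N in sequentially. finite (D N) \<and> X \<subseteq> D N \<and> D N \<subseteq> A"
      by (intro eventually_sequentiallyI[of N0]) (use fin sub mono in blast)
  qed
  ultimately have "(\<lambda>N. sum f (D N)) \<longlonglongrightarrow> infsum f A"
    by (rule filterlim_compose)
  then show ?thesis
    using lim LIMSEQ_unique by blast
qed

section \<open>Truncated multiple zeta values\<close>

fun mzv_trunc :: "nat \<Rightarrow> nat list \<Rightarrow> real" where
  "mzv_trunc N [] = 1"
| "mzv_trunc N (a # ks) = (\<Sum>m\<in>{1..<N}. mzv_trunc m ks / real m ^ a)"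

fun mzv_star_trunc :: "nat \<Rightarrow> nat list \<Rightarrow> real" where
  "mzv_star_trunc N [] = 1"
| "mzv_star_trunc N (a # ks) = (\<Sum>m\<in>{1..<N}. mzv_star_trunc (Suc m) ks / real m ^ a)"

definition mzv_summand :: "nat list \<Rightarrow> nat list \<Rightarrow> real" where
  "mzv_summand ks ms = (\<Prod>j<length ks. 1 / real (ms ! j) ^ (ks ! j))"

lemma mzv_summand_Cons: "mzv_summand (a # ks) (m # ms) = mzv_summand ks ms / real m ^ a"
  unfolding mzv_summand_def length_Cons prod.lessThan_Suc_shift by simp

lemma mzv_summand_nonneg: "0 \<le> mzv_summand ks ms"
  by (simp add: mzv_summand_def prod_nonneg)

definition mzv_indices :: "nat list \<Rightarrow> nat list set" where
  "mzv_indices ks = {ms. length ms = length ks \<and> sorted_wrt (>) ms \<and> (\<forall>m\<in>set ms. 0 < m)}"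

definition mzv_star_indices :: "nat list \<Rightarrow> nat list set" where
  "mzv_star_indices ks = {ms. length ms = length ks \<and> sorted_wrt (\<ge>) ms \<and> (\<forall>m\<in>set ms. 0 < m)}"

definition mzv_indices_below :: "nat list \<Rightarrow> nat \<Rightarrow> nat list set" where
  "mzv_indices_below ks N = {ms \<in> mzv_indices ks. \<forall>m\<in>set ms. m < N}"

definition mzv_star_indices_below :: "nat list \<Rightarrow> nat \<Rightarrow> nat list set" where
  "mzv_star_indices_below ks N = {ms \<in> mzv_star_indices ks. \<forall>m\<in>set ms. m < N}"

lemma mzv_eq_infsum: "mzv ks = infsum (mzv_summand ks) (mzv_indices ks)"
  unfolding mzv_def mzv_summand_def mzv_indices_def by (rule refl)

lemma mzv_star_eq_infsum: "mzv_star ks = infsum (mzv_summand ks) (mzv_star_indices ks)"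
  unfolding mzv_star_def mzv_summand_def mzv_star_indices_def by (rule refl)

lemma finite_mzv_indices_below: "finite (mzv_indices_below ks N)"
  by (rule finite_subset[of _ "{ms. set ms \<subseteq> {..<N} \<and> length ms = length ks}"])
    (auto simp: mzv_indices_below_def mzv_indices_def intro: finite_lists_length_eq)

lemma finite_mzv_star_indices_below: "finite (mzv_star_indices_below ks N)"
  by (rule finite_subset[of _ "{ms. set ms \<subseteq> {..<N} \<and> length ms = length ks}"])
    (auto simp: mzv_star_indices_below_def mzv_star_indices_def intro: finite_lists_length_eq)

lemma mzv_indices_below_Cons: "mzv_indices_below (a # ks) N = (\<lambda>(m, ms). m # ms) ` (SIGMA m:{1..<N}. mzv_indices_below ks m)"
proof
  show "mzv_indices_below (a # ks) N \<subseteq> (\<lambda>(m, ms). m # ms) ` (SIGMA m:{1..<N}. mzv_indices_below ks m)"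
  proof
    fix xs assume xs: "xs \<in> mzv_indices_below (a # ks) N"
    then obtain m ms where e: "xs = m # ms" by (cases xs) (auto simp: mzv_indices_below_def mzv_indices_def)
    then have "m \<in> {1..<N}" "ms \<in> mzv_indices_below ks m"
      using xs by (auto simp: mzv_indices_below_def mzv_indices_def)
    then show "xs \<in> (\<lambda>(m, ms). m # ms) ` (SIGMA m:{1..<N}. mzv_indices_below ks m)"
      using e by force
  qed
  show "(\<lambda>(m, ms). m # ms) ` (SIGMA m:{1..<N}. mzv_indices_below ks m) \<subseteq> mzv_indices_below (a # ks) N"
    by (auto simp: mzv_indices_below_def mzv_indices_def) (meson less_trans)
qed

lemma mzv_star_indices_below_Cons: "mzv_star_indices_below (a # ks) N = (\<lambda>(m, ms). m # ms) ` (SIGMA m:{1..<N}. mzv_star_indices_below ks (Suc m))"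
proof
  show "mzv_star_indices_below (a # ks) N \<subseteq> (\<lambda>(m, ms). m # ms) ` (SIGMA m:{1..<N}. mzv_star_indices_below ks (Suc m))"
  proof
    fix xs assume xs: "xs \<in> mzv_star_indices_below (a # ks) N"
    then obtain m ms where e: "xs = m # ms" by (cases xs) (auto simp: mzv_star_indices_below_def mzv_star_indices_def)
    then have "m \<in> {1..<N}" "ms \<in> mzv_star_indices_below ks (Suc m)"
      using xs by (auto simp: mzv_star_indices_below_def mzv_star_indices_def less_Suc_eq_le)
    then show "xs \<in> (\<lambda>(m, ms). m # ms) ` (SIGMA m:{1..<N}. mzv_star_indices_below ks (Suc m))"
      using e by force
  qed
  show "(\<lambda>(m, ms). m # ms) ` (SIGMA m:{1..<N}. mzv_star_indices_below ks (Suc m)) \<subseteq> mzv_star_indices_below (a # ks) N"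
    by (auto simp: mzv_star_indices_below_def mzv_star_indices_def less_Suc_eq_le) (meson le_less_trans)
qed

lemma mzv_trunc_eq_sum: "mzv_trunc N ks = sum (mzv_summand ks) (mzv_indices_below ks N)"
proof (induction ks arbitrary: N)
  case Nil
  have "mzv_indices_below [] N = {[]}" by (auto simp: mzv_indices_below_def mzv_indices_def)
  then show ?case by (simp add: mzv_summand_def)
next
  case (Cons a ks)
  have inj: "inj_on (\<lambda>(m, ms). m # ms) (SIGMA m:{1..<N}. mzv_indices_below ks m)"
    by (auto simp: inj_on_def)
  have "sum (mzv_summand (a # ks)) (mzv_indices_below (a # ks) N) = (\<Sum>(m, ms)\<in>(SIGMA m:{1..<N}. mzv_indices_below ks m). mzv_summand ks ms / real m ^ a)"
    unfolding mzv_indices_below_Cons sum.reindex[OF inj] by (rule sum.cong) (auto simp: mzv_summand_Cons)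
  also have "\<dots> = (\<Sum>m\<in>{1..<N}. \<Sum>ms\<in>mzv_indices_below ks m. mzv_summand ks ms / real m ^ a)"
    by (rule sum.Sigma[symmetric]) (auto simp: finite_mzv_indices_below)
  also have "\<dots> = mzv_trunc N (a # ks)"
    by (simp add: Cons sum_divide_distrib)
  finally show ?case ..
qed

lemma mzv_star_trunc_eq_sum: "mzv_star_trunc N ks = sum (mzv_summand ks) (mzv_star_indices_below ks N)"
proof (induction ks arbitrary: N)
  case Nil
  have "mzv_star_indices_below [] N = {[]}"
    by (auto simp: mzv_star_indices_below_def mzv_star_indices_def)
  then show ?case by (simp add: mzv_summand_def)
next
  case (Cons a ks)
  have inj: "inj_on (\<lambda>(m, ms). m # ms) (SIGMA m:{1..<N}. mzv_star_indices_below ks (Suc m))"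
    by (auto simp: inj_on_def)
  have "sum (mzv_summand (a # ks)) (mzv_star_indices_below (a # ks) N) = (\<Sum>(m, ms)\<in>(SIGMA m:{1..<N}. mzv_star_indices_below ks (Suc m)). mzv_summand ks ms / real m ^ a)"
    unfolding mzv_star_indices_below_Cons sum.reindex[OF inj] by (rule sum.cong) (auto simp: mzv_summand_Cons)
  also have "\<dots> = (\<Sum>m\<in>{1..<N}. \<Sum>ms\<in>mzv_star_indices_below ks (Suc m). mzv_summand ks ms / real m ^ a)"
    by (rule sum.Sigma[symmetric]) (auto simp: finite_mzv_star_indices_below)
  also have "\<dots> = mzv_star_trunc N (a # ks)"
    by (simp add: Cons sum_divide_distrib)
  finally show ?case ..
qed

lemma mzv_trunc_nonneg: "0 \<le> mzv_trunc N ks"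
  by (induction ks arbitrary: N) (auto intro!: sum_nonneg divide_nonneg_nonneg)

lemma mzv_trunc_mono: "N \<le> N' \<Longrightarrow> mzv_trunc N ks \<le> mzv_trunc N' ks"
proof (cases ks)
  case (Cons a ks')
  assume "N \<le> N'"
  then show ?thesis unfolding Cons
    by (simp, intro sum_mono2) (auto intro!: divide_nonneg_nonneg mzv_trunc_nonneg)
qed simp

lemma mzv_trunc_bounded:
  assumes "\<forall>x\<in>set ks. 2 \<le> x"
  shows "mzv_trunc N ks \<le> (\<Sum>n. inverse (real n ^ 2)) ^ length ks"
  using assms
proof (induction ks arbitrary: N)
  case (Cons a ks)
  define C where "C = (\<Sum>n. inverse (real n ^ 2))"
  have C: "summable (\<lambda>n. inverse (real n ^ 2))" "0 \<le> C"
    unfolding C_def using inverse_power_summable[of 2] by (auto intro: suminf_nonneg)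
  have "mzv_trunc N (a # ks) = (\<Sum>m\<in>{1..<N}. mzv_trunc m ks * inverse (real m ^ a))"
    by (simp add: divide_inverse)
  also have "\<dots> \<le> (\<Sum>m\<in>{1..<N}. C ^ length ks * inverse (real m ^ 2))"
  proof (rule sum_mono)
    fix m assume m: "m \<in> {1..<N}"
    have "real m ^ 2 \<le> real m ^ a"
      using m Cons.prems by (intro power_increasing) auto
    then show "mzv_trunc m ks * inverse (real m ^ a) \<le> C ^ length ks * inverse (real m ^ 2)"
      using Cons m C by (intro mult_mono le_imp_inverse_le) (auto simp: C_def mzv_trunc_nonneg)
  qed
  also have "\<dots> \<le> C ^ length ks * C"
    unfolding sum_distrib_left[symmetric]
    using C by (intro mult_left_mono) (auto simp: C_def intro: sum_le_suminf)
  finally show ?case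
    by (simp add: C_def mult.commute)
qed simp

lemma mzv_trunc_tendsto:
  assumes ks: "\<forall>x\<in>set ks. 2 \<le> x"
  shows "(\<lambda>N. mzv_trunc N ks) \<longlonglongrightarrow> mzv ks"
proof -
  have inc: "incseq (\<lambda>N. mzv_trunc N ks)" by (rule incseq_SucI) (rule mzv_trunc_mono, simp)
  obtain L where L: "(\<lambda>N. mzv_trunc N ks) \<longlonglongrightarrow> L"
    using incseq_convergent[OF inc, of "(\<Sum>n. inverse (real n ^ 2)) ^ length ks"] mzv_trunc_bounded[OF ks] by blast
  have "infsum (mzv_summand ks) (mzv_indices ks) = L"
  proof (rule infsum_eq_lim_exhausting[where D="mzv_indices_below ks"])
    show "finite (mzv_indices_below ks N)" for N by (rule finite_mzv_indices_below)
    show "mzv_indices_below ks N \<subseteq> mzv_indices ks" for N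
      by (auto simp: mzv_indices_below_def)
    show "N \<le> N' \<Longrightarrow> mzv_indices_below ks N \<subseteq> mzv_indices_below ks N'" for N N'
      by (auto simp: mzv_indices_below_def)
    show "\<exists>N. x \<in> mzv_indices_below ks N" if "x \<in> mzv_indices ks" for x
      using that member_le_sum_list[of _ x] by (auto simp: mzv_indices_below_def intro!: exI[of _ "Suc (sum_list x)"] le_imp_less_Suc)
    show "0 \<le> mzv_summand ks x" for x by (rule mzv_summand_nonneg)
    show "(\<lambda>N. sum (mzv_summand ks) (mzv_indices_below ks N)) \<longlonglongrightarrow> L"
      using L by (simp add: mzv_trunc_eq_sum)
  qed
  then show ?thesis using L by (simp add: mzv_eq_infsum)
qed

lemma mzv_trunc_Suc: "1 \<le> m \<Longrightarrow> mzv_trunc (Suc m) (a # q) = mzv_trunc m (a # q) + mzv_trunc m q / real m ^ a"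
proof -
  assume m: "1 \<le> m"
  have "{1..<Suc m} = insert m {1..<m}" using m by auto
  then show ?thesis by (simp add: add.commute)
qed

lemma sum_sum_list_swap: "(\<Sum>m\<in>M. sum_list (map (g m) L)) = sum_list (map (\<lambda>p. \<Sum>m\<in>M. g m p) L)"
  by (induction L) (simp_all add: sum.distrib)

lemma sum_list_divide: "sum_list (map f L) / (c::real) = sum_list (map (\<lambda>x. f x / c) L)"
  by (induction L) (simp_all add: add_divide_distrib)

lemma mzv_star_trunc_eq_sum_coarsen: "mzv_star_trunc N ks = sum_list (map (mzv_trunc N) (coarsen ks))"
proof (induction ks arbitrary: N rule: coarsen.induct)
  case 1
  then show ?case by simp
next
  case (2 k)
  then show ?case by simp
next
  case (3 k l ks)
  define C where "C = coarsen (l # ks)"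
  have ne: "p \<noteq> []" if "p \<in> set C" for p using coarsen_ne_Nil that C_def by blast
  have "mzv_star_trunc N (k # l # ks) = (\<Sum>m\<in>{1..<N}. mzv_star_trunc (Suc m) (l # ks) / real m ^ k)"
    by (simp only: mzv_star_trunc.simps)
  also have "\<dots> = (\<Sum>m\<in>{1..<N}. sum_list (map (mzv_trunc (Suc m)) C) / real m ^ k)"
    by (simp only: 3 C_def)
  also have "\<dots> = (\<Sum>m\<in>{1..<N}. sum_list (map (\<lambda>p. mzv_trunc m p / real m ^ k + mzv_trunc m (tl p) / real m ^ (k + hd p)) C))"
  proof (rule sum.cong[OF refl])
    fix m assume m: "m \<in> {1..<N}"
    show "sum_list (map (mzv_trunc (Suc m)) C) / real m ^ k
      = sum_list (map (\<lambda>p. mzv_trunc m p / real m ^ k + mzv_trunc m (tl p) / real m ^ (k + hd p)) C)"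
      unfolding sum_list_divide
    proof (rule arg_cong[where f=sum_list], rule map_cong[OF refl])
      fix p assume "p \<in> set C"
      then have "p \<noteq> []" using ne by blast
      then obtain a q where p: "p = a # q" by (cases p) auto
      show "mzv_trunc (Suc m) p / real m ^ k = mzv_trunc m p / real m ^ k + mzv_trunc m (tl p) / real m ^ (k + hd p)"
        using m unfolding p by (simp add: mzv_trunc_Suc add_divide_distrib power_add)
    qed
  qed
  also have "\<dots> = sum_list (map (\<lambda>p. mzv_trunc N (k # p) + mzv_trunc N ((k + hd p) # tl p)) C)"
    by (simp add: sum_sum_list_swap sum.distrib)
  also have "\<dots> = sum_list (map (mzv_trunc N) (coarsen (k # l # ks)))"
    by (simp add: C_def sum_list_addf o_def)
  finally show ?case .
qed

lemma tendsto_sum_list: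
  fixes g :: "nat \<Rightarrow> 'a \<Rightarrow> real"
  shows "(\<And>x. x \<in> set L \<Longrightarrow> (\<lambda>N. g N x) \<longlonglongrightarrow> h x) \<Longrightarrow>
   (\<lambda>N. sum_list (map (g N) L)) \<longlonglongrightarrow> sum_list (map h L)"
proof (induction L)
  case (Cons a L)
  then have "(\<lambda>N. g N a) \<longlonglongrightarrow> h a" "(\<lambda>N. sum_list (map (g N) L)) \<longlonglongrightarrow> sum_list (map h L)"
    by auto
  then show ?case by (simp add: tendsto_add)
qed simp

lemma mzv_star_trunc_tendsto:
  assumes ks: "\<forall>x\<in>set ks. 2 \<le> x"
  shows "(\<lambda>N. mzv_star_trunc N ks) \<longlonglongrightarrow> mzv_star ks"
proof -
  have L: "(\<lambda>N. mzv_star_trunc N ks) \<longlonglongrightarrow> sum_list (map mzv (coarsen ks))"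
    unfolding mzv_star_trunc_eq_sum_coarsen
    by (rule tendsto_sum_list, rule mzv_trunc_tendsto) (use coarsen_lower_bound[of _ ks 2] ks in blast)
  have "infsum (mzv_summand ks) (mzv_star_indices ks) = sum_list (map mzv (coarsen ks))"
  proof (rule infsum_eq_lim_exhausting[where D="mzv_star_indices_below ks"])
    show "finite (mzv_star_indices_below ks N)" for N by (rule finite_mzv_star_indices_below)
    show "mzv_star_indices_below ks N \<subseteq> mzv_star_indices ks" for N
      by (auto simp: mzv_star_indices_below_def)
    show "N \<le> N' \<Longrightarrow> mzv_star_indices_below ks N \<subseteq> mzv_star_indices_below ks N'" for N N'
      by (auto simp: mzv_star_indices_below_def)
    show "\<exists>N. x \<in> mzv_star_indices_below ks N" if "x \<in> mzv_star_indices ks" for x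
      using that member_le_sum_list[of _ x] by (auto simp: mzv_star_indices_below_def intro!: exI[of _ "Suc (sum_list x)"] le_imp_less_Suc)
    show "0 \<le> mzv_summand ks x" for x by (rule mzv_summand_nonneg)
    show "(\<lambda>N. sum (mzv_summand ks) (mzv_star_indices_below ks N)) \<longlonglongrightarrow> sum_list (map mzv (coarsen ks))"
      using L by (simp add: mzv_star_trunc_eq_sum)
  qed
  then show ?thesis using L by (simp add: mzv_star_eq_infsum)
qed

section \<open>Evaluating words at truncated multiple zeta values\<close>

definition of_rat_poly :: "rat poly \<Rightarrow> real poly" where "of_rat_poly p = map_poly of_rat p"

lemma coeff_of_rat_poly: "coeff (of_rat_poly p) i = of_rat (coeff p i)"
  by (simp add: of_rat_poly_def coeff_map_poly)

lemma of_rat_poly_0 [simp]: "of_rat_poly 0 = 0"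
  by (simp add: of_rat_poly_def)

lemma of_rat_poly_add: "of_rat_poly (p + q) = of_rat_poly p + of_rat_poly q"
  by (rule poly_eqI) (simp add: coeff_of_rat_poly of_rat_add)

lemma of_rat_poly_1 [simp]: "of_rat_poly 1 = 1"
  by (rule poly_eqI) (simp add: coeff_of_rat_poly coeff_1)

lemma of_rat_poly_mult: "of_rat_poly (p * q) = of_rat_poly p * of_rat_poly q"
  by (rule poly_eqI) (simp add: coeff_of_rat_poly coeff_mult of_rat_sum of_rat_mult)

lemma of_rat_poly_power: "of_rat_poly (p ^ n) = of_rat_poly p ^ n"
  by (induction n) (simp_all add: of_rat_poly_mult)

lemma of_rat_poly_tvar: "of_rat_poly tvar = [:0, 1:]"
  by (rule poly_eqI) (simp add: coeff_of_rat_poly tvar_def coeff_pCons split: nat.split)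

lemma of_rat_poly_tvar_minus_1: "of_rat_poly (tvar - 1) = [:-1, 1:]"
  by (rule poly_eqI) (simp add: coeff_of_rat_poly tvar_def coeff_pCons coeff_1 split: nat.split)

lemma mult_const_poly_right: "p * [:c:] = smult c p"
  by (simp add: mult.commute[of p])

lemma smult_sum_right: "smult c (\<Sum>i\<in>I. f i) = (\<Sum>i\<in>I. smult c (f i))"
  by (induction I rule: infinite_finite_induct) (simp_all add: smult_add_right)

definition trunc_zeta_map :: "nat \<Rightarrow> nc \<Rightarrow> real poly" where
  "trunc_zeta_map N f = (\<Sum>w\<in>supp f. smult (mzv_trunc N (idx w)) (of_rat_poly (f w)))"

lemma trunc_zeta_map_superset: "finite F \<Longrightarrow> supp f \<subseteq> F \<Longrightarrow> trunc_zeta_map N f = (\<Sum>w\<in>F. smult (mzv_trunc N (idx w)) (of_rat_poly (f w)))"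
  unfolding trunc_zeta_map_def by (rule sum.mono_neutral_left) (auto simp: supp_def)

lemma trunc_zeta_map_add:
  assumes "finsupp f" "finsupp g"
  shows "trunc_zeta_map N (f + g) = trunc_zeta_map N f + trunc_zeta_map N g"
proof -
  have F: "finite (supp f \<union> supp g)" using assms by (simp add: finsupp_def)
  have "trunc_zeta_map N (f + g) = (\<Sum>w\<in>supp f \<union> supp g. smult (mzv_trunc N (idx w)) (of_rat_poly ((f + g) w)))"
    by (rule trunc_zeta_map_superset[OF F]) (auto simp: supp_def)
  also have "\<dots> = trunc_zeta_map N f + trunc_zeta_map N g"
    by (subst (1 2) trunc_zeta_map_superset[OF F]) (auto simp: of_rat_poly_add smult_add_right sum.distrib)
  finally show ?thesis .
qed

lemma trunc_zeta_map_nc_smult: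
  assumes "finsupp f"
  shows "trunc_zeta_map N (nc_smult c f) = of_rat_poly c * trunc_zeta_map N f"
proof -
  have F: "finite (supp f)" using assms by (simp add: finsupp_def)
  have "trunc_zeta_map N (nc_smult c f) = (\<Sum>w\<in>supp f. smult (mzv_trunc N (idx w)) (of_rat_poly (nc_smult c f w)))"
    by (rule trunc_zeta_map_superset[OF F]) (rule supp_nc_smult)
  also have "\<dots> = (\<Sum>w\<in>supp f. smult (mzv_trunc N (idx w)) (of_rat_poly (c * f w)))"
    by simp
  also have "\<dots> = of_rat_poly c * trunc_zeta_map N f"
    by (simp add: trunc_zeta_map_def of_rat_poly_mult sum_distrib_left)
  finally show ?thesis .
qed

lemma trunc_zeta_map_zero [simp]: "trunc_zeta_map N 0 = 0"
  by (simp add: trunc_zeta_map_def supp_def)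

lemma trunc_zeta_map_sum: "finite I \<Longrightarrow> (\<And>i. i \<in> I \<Longrightarrow> finsupp (f i)) \<Longrightarrow> trunc_zeta_map N (\<Sum>i\<in>I. f i) = (\<Sum>i\<in>I. trunc_zeta_map N (f i))"
proof (induction I rule: finite_induct)
  case (insert x F)
  have "trunc_zeta_map N (sum f (insert x F)) = trunc_zeta_map N (f x + sum f F)"
    by (simp only: sum.insert[OF insert.hyps])
  also have "\<dots> = trunc_zeta_map N (f x) + trunc_zeta_map N (sum f F)"
    by (rule trunc_zeta_map_add) (use insert in auto)
  also have "\<dots> = trunc_zeta_map N (f x) + (\<Sum>i\<in>F. trunc_zeta_map N (f i))"
    using insert by simp
  finally show ?case by (simp only: sum.insert[OF insert.hyps])
qed simp

lemma trunc_zeta_map_sum_list: "(\<And>x. x \<in> set L \<Longrightarrow> finsupp (f x)) \<Longrightarrow>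
   trunc_zeta_map N (sum_list (map f L)) = sum_list (map (\<lambda>x. trunc_zeta_map N (f x)) L)"
proof (induction L)
  case (Cons a L)
  have fs: "finsupp (sum_list (map f L))"
    using Cons.prems by (intro finsupp_sum_list) auto
  have "trunc_zeta_map N (sum_list (map f (a # L))) = trunc_zeta_map N (f a + sum_list (map f L))"
    by (simp only: list.map sum_list.Cons)
  also have "\<dots> = trunc_zeta_map N (f a) + trunc_zeta_map N (sum_list (map f L))"
    by (rule trunc_zeta_map_add) (use Cons fs in auto)
  also have "\<dots> = trunc_zeta_map N (f a) + sum_list (map (\<lambda>x. trunc_zeta_map N (f x)) L)"
    using Cons by simp
  finally show ?case by (simp only: list.map sum_list.Cons)
qed simp

lemma trunc_zeta_map_wd: "trunc_zeta_map N (wd w) = [:mzv_trunc N (idx w):]"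
  by (simp add: trunc_zeta_map_def)

lemma trunc_zeta_map_cat_zw: assumes a: "1 \<le> a" and P: "finsupp P"
  shows "trunc_zeta_map N (cat (zw a) P) = (\<Sum>m\<in>{1..<N}. smult (1 / real m ^ a) (trunc_zeta_map m P))"
proof -
  have F: "finite (supp P)" using P by (simp add: finsupp_def)
  have "trunc_zeta_map N (cat (zw a) P) = trunc_zeta_map N (\<Sum>v\<in>supp P. nc_smult (P v) (wd (z a @ v)))"
    by (simp add: zw_def cat_wd_expansion[OF P])
  also have "\<dots> = (\<Sum>v\<in>supp P. of_rat_poly (P v) * [:mzv_trunc N (a # idx v):])"
    using F a by (simp add: trunc_zeta_map_sum trunc_zeta_map_nc_smult trunc_zeta_map_wd idx_z_append)
  also have "\<dots> = (\<Sum>v\<in>supp P. \<Sum>m\<in>{1..<N}. smult (mzv_trunc m (idx v) / real m ^ a) (of_rat_poly (P v)))"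
    by (simp add: mult_const_poly_right smult_sum)
  also have "\<dots> = (\<Sum>m\<in>{1..<N}. \<Sum>v\<in>supp P. smult (mzv_trunc m (idx v) / real m ^ a) (of_rat_poly (P v)))"
    by (rule sum.swap)
  also have "\<dots> = (\<Sum>m\<in>{1..<N}. smult (1 / real m ^ a) (trunc_zeta_map m P))"
    by (simp add: trunc_zeta_map_def smult_sum_right)
  finally show ?thesis .
qed

lemma mzv_trunc_stuffle:
  "mzv_trunc N (a # k) * mzv_trunc N (b # l) = (\<Sum>m\<in>{1..<N}. mzv_trunc m k * mzv_trunc m (b # l) / real m ^ a
     + mzv_trunc m (a # k) * mzv_trunc m l / real m ^ b + mzv_trunc m k * mzv_trunc m l / real m ^ (a + b))"
proof (induction N)
  case 0
  then show ?case by simp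
next
  case (Suc N)
  show ?case
  proof (cases "N = 0")
    case True then show ?thesis by simp
  next
    case False
    then have N: "1 \<le> N" by simp
    have ins: "{1..<Suc N} = insert N {1..<N}" using N by auto
    define A where "A = mzv_trunc N (a # k)"
    define B where "B = mzv_trunc N (b # l)"
    define \<alpha> where "\<alpha> = mzv_trunc N k / real N ^ a"
    define \<beta> where "\<beta> = mzv_trunc N l / real N ^ b"
    have "mzv_trunc (Suc N) (a # k) * mzv_trunc (Suc N) (b # l) = (A + \<alpha>) * (B + \<beta>)"
      unfolding A_def B_def \<alpha>_def \<beta>_def using mzv_trunc_Suc[OF N] by simp
    also have "\<dots> = A * B + (\<alpha> * B + A * \<beta> + \<alpha> * \<beta>)"
      by (simp add: algebra_simps)
    also have "\<alpha> * \<beta> = mzv_trunc N k * mzv_trunc N l / real N ^ (a + b)"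
      by (simp add: \<alpha>_def \<beta>_def power_add)
    finally show ?thesis
      unfolding ins using Suc by (simp add: A_def B_def \<alpha>_def \<beta>_def add.commute)
  qed
qed

lemma trunc_zeta_map_harm_idx: "\<forall>x\<in>set k. 1 \<le> x \<Longrightarrow> \<forall>x\<in>set l. 1 \<le> x \<Longrightarrow> trunc_zeta_map N (harm_idx k l) = [:mzv_trunc N k * mzv_trunc N l:]"
proof (induction k l arbitrary: N rule: harm_idx.induct)
  case (1 l)
  then show ?case by (simp add: trunc_zeta_map_wd idx_zs)
next
  case (2 a k)
  then show ?case by (simp add: trunc_zeta_map_wd idx_zs del: set_simps(2))
next
  case (3 a k b l)
  have a: "1 \<le> a" and b: "1 \<le> b" using 3 by auto
  have "trunc_zeta_map N (harm_idx (a # k) (b # l)) =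
     trunc_zeta_map N (cat (zw a) (harm_idx k (b # l))) + trunc_zeta_map N (cat (zw b) (harm_idx (a # k) l))
     + trunc_zeta_map N (cat (zw (a + b)) (harm_idx k l))"
    by (simp add: nc_add_eq_plus trunc_zeta_map_add finsupp_harm_idx zw_def)
  also have "\<dots> = [:mzv_trunc N (a # k) * mzv_trunc N (b # l):]"
  proof -
    have I1: "trunc_zeta_map m (harm_idx k (b # l)) = [:mzv_trunc m k * mzv_trunc m (b # l):]" for m
      using 3(1) 3(4,5) by (simp del: mzv_trunc.simps)
    have I2: "trunc_zeta_map m (harm_idx (a # k) l) = [:mzv_trunc m (a # k) * mzv_trunc m l:]" for m
      using 3(2) 3(4,5) by (simp del: mzv_trunc.simps)
    have I3: "trunc_zeta_map m (harm_idx k l) = [:mzv_trunc m k * mzv_trunc m l:]" for m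
      using 3(3) 3(4,5) by (simp del: mzv_trunc.simps)
    have ab: "1 \<le> a + b" using a by simp
    show ?thesis
      unfolding trunc_zeta_map_cat_zw[OF a finsupp_harm_idx] trunc_zeta_map_cat_zw[OF b finsupp_harm_idx] trunc_zeta_map_cat_zw[OF ab finsupp_harm_idx] I1 I2 I3 mzv_trunc_stuffle
      by (simp add: sum.distrib sum_to_poly del: mzv_trunc.simps)
  qed
  finally show ?case .
qed

lemma trunc_zeta_map_hprod:
  assumes f: "finsupp f" and g: "finsupp g"
  shows "trunc_zeta_map N (hprod f g) = trunc_zeta_map N f * trunc_zeta_map N g"
proof -
  have F: "finite (supp f)" "finite (supp g)" using f g by (auto simp: finsupp_def)
  have "trunc_zeta_map N (hprod f g) = (\<Sum>v\<in>supp f. \<Sum>w\<in>supp g. of_rat_poly (f v * g w) * [:mzv_trunc N (idx v) * mzv_trunc N (idx w):])"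
  proof -
    have ZH: "trunc_zeta_map N (harm_words v w) = [:mzv_trunc N (idx v) * mzv_trunc N (idx w):]" for v w
      by (rule trunc_zeta_map_harm_idx) (rule idx_ge1)+
    show ?thesis unfolding hprod_eq_sum
      using F by (simp add: trunc_zeta_map_sum trunc_zeta_map_nc_smult finsupp_harm_idx ZH)
  qed
  also have "\<dots> = (\<Sum>v\<in>supp f. \<Sum>w\<in>supp g. smult (mzv_trunc N (idx v)) (of_rat_poly (f v)) * smult (mzv_trunc N (idx w)) (of_rat_poly (g w)))"
    by (simp add: mult_const_poly_right of_rat_poly_mult mult_ac)
  also have "\<dots> = trunc_zeta_map N f * trunc_zeta_map N g"
    by (simp add: trunc_zeta_map_def sum_product)
  finally show ?thesis .
qed

lemma coeff_pc: "coeff [:c:] i = (if i = 0 then c else 0)"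
  by (cases i) auto

lemma coeff_sum_list_mult_const: "coeff (sum_list (map (\<lambda>p. A p * [:x p:]) L)) i = sum_list (map (\<lambda>p. coeff (A p) i * x p) L)"
  by (induction L) (simp_all add: mult_const_poly_right mult.commute)

lemma poly_identity_limit:
  fixes A :: "'a \<Rightarrow> real poly" and B :: "'b \<Rightarrow> 'c \<Rightarrow> real poly"
  assumes eq: "\<And>N. sum_list (map (\<lambda>p. A p * [:x N p:]) L) = [:y N:] + (\<Sum>j\<in>J. \<Sum>m\<in>M j. B j m * [:u N j m:])"
    and cx: "\<And>p. p \<in> set L \<Longrightarrow> (\<lambda>N. x N p) \<longlonglongrightarrow> x' p"
    and cy: "y \<longlonglongrightarrow> y'"
    and cu: "\<And>j m. j \<in> J \<Longrightarrow> m \<in> M j \<Longrightarrow> (\<lambda>N. u N j m) \<longlonglongrightarrow> u' j m"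
  shows "sum_list (map (\<lambda>p. A p * [:x' p:]) L) = [:y':] + (\<Sum>j\<in>J. \<Sum>m\<in>M j. B j m * [:u' j m:])"
proof (rule poly_eqI)
  fix i
  have c1: "(\<lambda>N. coeff (sum_list (map (\<lambda>p. A p * [:x N p:]) L)) i)
      \<longlonglongrightarrow> coeff (sum_list (map (\<lambda>p. A p * [:x' p:]) L)) i"
    unfolding coeff_sum_list_mult_const
    by (rule tendsto_sum_list) (use cx in \<open>auto intro!: tendsto_mult_left\<close>)
  have c2: "(\<lambda>N. coeff ([:y N:] + (\<Sum>j\<in>J. \<Sum>m\<in>M j. B j m * [:u N j m:])) i)
      \<longlonglongrightarrow> coeff ([:y':] + (\<Sum>j\<in>J. \<Sum>m\<in>M j. B j m * [:u' j m:])) i"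
    unfolding coeff_add coeff_sum mult_const_poly_right coeff_smult coeff_pc
    by (intro tendsto_add tendsto_sum tendsto_mult) (auto simp: cy cu)
  show "coeff (sum_list (map (\<lambda>p. A p * [:x' p:]) L)) i
     = coeff ([:y':] + (\<Sum>j\<in>J. \<Sum>m\<in>M j. B j m * [:u' j m:])) i"
    using c1 c2 unfolding eq by (rule LIMSEQ_unique)
qed

lemma trunc_zeta_map_S_map_zk_pow:
  assumes k: "1 \<le> k"
  shows "trunc_zeta_map N (S_map s (wd (concat (replicate n (z k)))))
    = sum_list (map (\<lambda>p. of_rat_poly (s ^ (n - length p)) * [:mzv_trunc N p:]) (coarsen (replicate n k)))"
proof -
  have "\<forall>x\<in>set p. 1 \<le> x" if "p \<in> set (coarsen (replicate n k))" for p
    using coarsen_lower_bound[OF that, of 1] k by auto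
  then show ?thesis
    by (simp add: S_map_wd S_word_zk_pow_eq_coarsen_sum[OF k] coarsen_sum_def trunc_zeta_map_sum_list
        trunc_zeta_map_nc_smult trunc_zeta_map_wd idx_zs cong: map_cong)
qed

lemma trunc_zeta_map_S_map_one_zk_pow:
  "1 \<le> k \<Longrightarrow> trunc_zeta_map N (S_map 1 (wd (concat (replicate n (z k)))))
    = [:mzv_star_trunc N (replicate n k):]"
proof -
  have "sum_list (map (\<lambda>p. [:f p:]) L) = [:sum_list (map f L):]" for f :: "nat list \<Rightarrow> real" and L
    by (induction L) simp_all
  then show "1 \<le> k \<Longrightarrow> ?thesis"
    by (simp add: trunc_zeta_map_S_map_zk_pow mzv_star_trunc_eq_sum_coarsen)
qed

lemma trunc_zeta_map_zk_comps:
  assumes "1 \<le> k"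
  shows "trunc_zeta_map N (zk_comps k m j) = [:\<Sum>is\<in>comps m j. mzv_trunc N (map (\<lambda>i. i * k) is):]"
proof -
  have "\<forall>x\<in>set (map (\<lambda>i. i * k) is). 1 \<le> x" if "is \<in> comps m j" for "is"
    using that assms by (auto simp: comps_def)
  then show ?thesis
    by (simp add: zk_comps_def trunc_zeta_map_sum trunc_zeta_map_wd idx_zs sum_to_poly)
qed

lemma mzv_t_trunc_identity:
  assumes k: "1 \<le> k"
  shows "sum_list (map (\<lambda>p. [:0, 1:] ^ (n - length p) * [:mzv_trunc N p:]) (coarsen (replicate n k)))
    = [:mzv_star_trunc N (replicate n k):] + (\<Sum>j\<in>{2..n}. \<Sum>m\<in>{1..j div 2}.
        [:0, 1:] ^ (j - 2 * m) * [:-1, 1:] ^ m *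
        [:(\<Sum>is\<in>comps m j. mzv_trunc N (map (\<lambda>i. i * k) is)) * mzv_star_trunc N (replicate (n - j) k):])"
proof -
  have fin: "finsupp (S_map 1 (wd (concat (replicate i (z k)))))" for i
    by (simp add: S_map_zk_pow[OF k])
  have "trunc_zeta_map N (S_map tvar (wd (concat (replicate n (z k)))))
      = trunc_zeta_map N (S_map 1 (wd (concat (replicate n (z k))))) + (\<Sum>j\<in>{2..n}. \<Sum>m\<in>{1..j div 2}.
        of_rat_poly (comp_weight m j) * (trunc_zeta_map N (zk_comps k m j)
          * trunc_zeta_map N (S_map 1 (wd (concat (replicate (n - j) (z k)))))))"
    unfolding S_map_tvar_zk_pow[OF k]
    by (simp add: fin trunc_zeta_map_add trunc_zeta_map_sum trunc_zeta_map_nc_smult trunc_zeta_map_hprod)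
  then show ?thesis
    unfolding trunc_zeta_map_S_map_one_zk_pow[OF k] trunc_zeta_map_zk_comps[OF k]
    unfolding trunc_zeta_map_S_map_zk_pow[OF k]
    by (simp add: comp_weight_def of_rat_poly_mult of_rat_poly_power of_rat_poly_tvar
        of_rat_poly_tvar_minus_1 mult_to_poly mult.commute)
qed

theorem mzv_t_replicate:
  assumes k: "2 \<le> k"
  shows "mzv_t (replicate n k) = [:mzv_star (replicate n k):]
    + (\<Sum>j\<in>{2..n}. \<Sum>m\<in>{1..j div 2}. [:0, 1:] ^ (j - 2 * m) * [:-1, 1:] ^ m *
        [:(\<Sum>is\<in>comps m j. mzv (map (\<lambda>i. i * k) is)) * mzv_star (replicate (n - j) k):])"
proof -
  have ge2_replicate: "\<forall>x\<in>set (replicate m k). 2 \<le> x" for m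
    using k by simp
  have ge2_comps: "\<forall>x\<in>set (map (\<lambda>i. i * k) is). 2 \<le> x" if "is \<in> comps m j" for "is" m j
  proof -
    have "2 * 1 \<le> i * k" if "2 \<le> i" for i
      using mult_le_mono[OF that, of 1 k] k by simp
    then show ?thesis
      using \<open>is \<in> comps m j\<close> by (auto simp: comps_def)
  qed
  have "mzv_t (replicate n k)
      = sum_list (map (\<lambda>p. [:0, 1:] ^ (n - length p) * [:mzv p:]) (coarsen (replicate n k)))"
    by (simp add: mzv_t_def monom_altdef mult_const_poly_right)
  also have "\<dots> = [:mzv_star (replicate n k):] + (\<Sum>j\<in>{2..n}. \<Sum>m\<in>{1..j div 2}.
        [:0, 1:] ^ (j - 2 * m) * [:-1, 1:] ^ m *
        [:(\<Sum>is\<in>comps m j. mzv (map (\<lambda>i. i * k) is)) * mzv_star (replicate (n - j) k):])"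
  proof (rule poly_identity_limit[OF mzv_t_trunc_identity])
    show "(\<lambda>N. mzv_trunc N p) \<longlonglongrightarrow> mzv p" if "p \<in> set (coarsen (replicate n k))" for p
      using coarsen_lower_bound[OF that ge2_replicate] by (rule mzv_trunc_tendsto)
    show "(\<lambda>N. mzv_star_trunc N (replicate n k)) \<longlonglongrightarrow> mzv_star (replicate n k)"
      by (rule mzv_star_trunc_tendsto[OF ge2_replicate])
    show "(\<lambda>N. (\<Sum>is\<in>comps m j. mzv_trunc N (map (\<lambda>i. i * k) is)) * mzv_star_trunc N (replicate (n - j) k))
      \<longlonglongrightarrow> (\<Sum>is\<in>comps m j. mzv (map (\<lambda>i. i * k) is)) * mzv_star (replicate (n - j) k)" for j m
      by (intro tendsto_mult tendsto_sum mzv_trunc_tendsto mzv_star_trunc_tendsto ge2_replicate)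
        (rule ge2_comps)
  qed (use k in simp)
  finally show ?thesis .
qed

theorem corollary4p9:
  fixes k :: nat
  assumes "1 \<le> k"
  shows "(\<forall>n. ser_S tvar (geom (zu k)) n
               = ser_harm (geom (Xser k)) (ser_S 1 (geom (zu k))) n)
       \<and> (\<forall>n. S_map tvar (wd (concat (replicate n (z k))))
               = nc_add (S_map 1 (wd (concat (replicate n (z k)))))
                   (\<lambda>w. \<Sum>j\<in>{2..n}. \<Sum>m\<in>{1..j div 2}.
                      tvar ^ (j - 2 * m) * (tvar - 1) ^ m *
                      hprod (\<lambda>v. \<Sum>is\<in>comps m j. wd (zs (map (\<lambda>i. i * k) is)) v)
                            (S_map 1 (wd (concat (replicate (n - j) (z k))))) w))
       \<and> (2 \<le> k \<longrightarrow> (\<forall>n. mzv_t (replicate n k)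
               = [:mzv_star (replicate n k):]
                 + (\<Sum>j\<in>{2..n}. \<Sum>m\<in>{1..j div 2}.
                      [:0, 1:] ^ (j - 2 * m) * [:-1, 1:] ^ m *
                      [:(\<Sum>is\<in>comps m j. mzv (map (\<lambda>i. i * k) is))
                         * mzv_star (replicate (n - j) k):])))"
  unfolding nc_add_eq_plus zk_comps_eq_fun S_map_tvar_zk_pow[OF assms] ser_S_geom_zu_eq_ser_harm[OF assms]
  using mzv_t_replicate by (simp add: fun_eq_iff sum_fun_apply comp_weight_def)

end
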